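(* (Explicit Rayleigh's Monotonicity Law II.) Let $\Gamma$ be a metrized graph, let $e_i$ be an edge of $\Gamma$ with end points $p_i,q_i$ and length $L_i$, and let $\Gamma'$ be the metrized graph obtained from $\Gamma$ by replacing $e_i$ by an edge $e_i'$ with the same end points and length $L_i'>0$. For $s,t\in\Gamma-e_i$: if $e_i$ is not a bridge, $$r(s,t)=r_{\Gamma'}(s,t)+\frac{L_i-L_i'}{(L_i+R_i)(L_i'+R_i)}\big(j^{\Gamma-e_i}_{p_i}(q_i,s)-j^{\Gamma-e_i}_{p_i}(q_i,t)\big)^2 .$$ If $e_i$ is a bridge, then $r(s,t)=r_{\Gamma'}(s,t)$ when $s,t$ lie in the same connected component of $\Gamma-e_i$, and $r(s,t)=r_{\Gamma'}(s,t)+L_i-L_i'$ otherwise. In particular, if $e_i$ is not a bridge and $L_i>L_i'$, then $r(s,t)\ge r_{\Gamma'}(s,t)$ with equality iff $j^{\Gamma-e_i}_{p_i}(q_i,s)=j^{\Gamma-e_i}_{p_i}(q_i,t)$; if $e_i$ is a bridge and $L_i>L_i'$, then $r(s,t)\ge r_{\Gamma'}(s,t)$ with equality iff $s$ and $t$ are in the same connected component of $\Gamma-e_i$.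
   Context: A metrized graph $\Gamma$ is a finite connected graph (multiple edges and self-loops allowed) in which each edge is identified with a closed line segment of positive length. $\Gamma$ is regarded as a resistive electric circuit in which each edge is a resistor whose resistance equals its length. $r(x,y)$ is the effective resistance; $j_z(x,y)$ is the voltage at $x$ when a unit current enters at $y$ and exits at $z$, with reference voltage $0$ at $z$. $\Gamma-e_i$ is obtained by deleting the interior of $e_i$; $e_i$ is a bridge if $\Gamma-e_i$ is disconnected; for non-bridge $e_i$, $R_i:=r_{\Gamma-e_i}(p_i,q_i)$, and $j^{\Gamma-e_i}$ is the voltage function on $\Gamma-e_i$. *)

theory Defs
  imports Complex_Main
begin

text \<open>A metrized graph is given combinatorially: a finite vertex set, a finite edge set
(multiple edges and self-loops allowed), the ordered pair of end points of each edge and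
a positive length for each edge. Edge e is identified with the segment [0, len e], with
0 corresponding to fst (ends e) and len e to snd (ends e).\<close>

record ('v,'e) mgraph =
  verts :: "'v set"
  edges :: "'e set"
  ends  :: "'e \<Rightarrow> 'v \<times> 'v"
  len   :: "'e \<Rightarrow> real"

text \<open>Points of a metrized graph: vertices, or interior points of edges
(Inner e t is the point at distance t from fst (ends e) along e).\<close>

datatype ('v,'e) pt = Vert 'v | Inner 'e real

definition points :: "('v,'e) mgraph \<Rightarrow> ('v,'e) pt set" where
  "points G = Vert ` verts G \<union> {Inner e t |e t. e \<in> edges G \<and> 0 < t \<and> t < len G e}"

definition edge_pt :: "('v,'e) mgraph \<Rightarrow> 'e \<Rightarrow> real \<Rightarrow> ('v,'e) pt" where
  "edge_pt G e t = (if t = 0 then Vert (fst (ends G e))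
                    else if t = len G e then Vert (snd (ends G e)) else Inner e t)"

definition adj :: "('v,'e) mgraph \<Rightarrow> 'v \<Rightarrow> 'v \<Rightarrow> bool" where
  "adj G u v \<longleftrightarrow> (\<exists>e\<in>edges G. ends G e = (u, v) \<or> ends G e = (v, u))"

definition vconn :: "('v,'e) mgraph \<Rightarrow> 'v \<Rightarrow> 'v \<Rightarrow> bool" where
  "vconn G u v \<longleftrightarrow> (adj G)\<^sup>*\<^sup>* u v"

definition graph_connected :: "('v,'e) mgraph \<Rightarrow> bool" where
  "graph_connected G \<longleftrightarrow> (\<forall>u\<in>verts G. \<forall>v\<in>verts G. vconn G u v)"

definition mgraph_wf :: "('v,'e) mgraph \<Rightarrow> bool" where
  "mgraph_wf G \<longleftrightarrow> finite (verts G) \<and> finite (edges G) \<and> verts G \<noteq> {} \<and>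
     (\<forall>e\<in>edges G. fst (ends G e) \<in> verts G \<and> snd (ends G e) \<in> verts G \<and> len G e > 0) \<and>
     graph_connected G"

text \<open>Vertex representing the position of a point (an interior point of an edge lies in the
same connected component as the first end point of that edge).\<close>

fun rep :: "('v,'e) mgraph \<Rightarrow> ('v,'e) pt \<Rightarrow> 'v" where
  "rep G (Vert v) = v"
| "rep G (Inner e t) = fst (ends G e)"

definition same_component :: "('v,'e) mgraph \<Rightarrow> ('v,'e) pt \<Rightarrow> ('v,'e) pt \<Rightarrow> bool" where
  "same_component G x y \<longleftrightarrow> vconn G (rep G x) (rep G y)"

definition delete_edge :: "('v,'e) mgraph \<Rightarrow> 'e \<Rightarrow> ('v,'e) mgraph" where
  "delete_edge G e = G\<lparr>edges := edges G - {e}\<rparr>"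

definition set_length :: "('v,'e) mgraph \<Rightarrow> 'e \<Rightarrow> real \<Rightarrow> ('v,'e) mgraph" where
  "set_length G e L = G\<lparr>len := (len G)(e := L)\<rparr>"

definition is_bridge :: "('v,'e) mgraph \<Rightarrow> 'e \<Rightarrow> bool" where
  "is_bridge G e \<longleftrightarrow> e \<in> edges G \<and> \<not> graph_connected (delete_edge G e)"

definition dslope :: "(real \<Rightarrow> real) \<Rightarrow> real \<Rightarrow> real \<Rightarrow> real" where
  "dslope g t s = Lim (at_right 0) (\<lambda>h. (g (t + s * h) - g t) / h)"

definition outflow :: "('v,'e) mgraph \<Rightarrow> (('v,'e) pt \<Rightarrow> real) \<Rightarrow> ('v,'e) pt \<Rightarrow> real" where
  "outflow G f p = (case p of
      Vert v \<Rightarrow> (\<Sum>e\<in>{e\<in>edges G. fst (ends G e) = v}. dslope (\<lambda>t. f (edge_pt G e t)) 0 1)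
              + (\<Sum>e\<in>{e\<in>edges G. snd (ends G e) = v}. dslope (\<lambda>t. f (edge_pt G e t)) (len G e) (-1))
    | Inner e t \<Rightarrow> dslope (\<lambda>u. f (edge_pt G e u)) t 1 + dslope (\<lambda>u. f (edge_pt G e u)) t (-1))"

text \<open>f is the voltage function for a unit current entering at y and exiting at z, with
reference voltage 0 at z: f is continuous on each edge, affine on each edge away from y and z,
satisfies Kirchhoff's current law (sum of outgoing slopes = -(delta_y - delta_z)) at every
point, vanishes at z, and is normalised to 0 outside the graph.\<close>

definition is_voltage :: "('v,'e) mgraph \<Rightarrow> ('v,'e) pt \<Rightarrow> ('v,'e) pt \<Rightarrow> (('v,'e) pt \<Rightarrow> real) \<Rightarrow> bool" where
  "is_voltage G y z f \<longleftrightarrow>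
     f z = 0 \<and>
     (\<forall>p. p \<notin> points G \<longrightarrow> f p = 0) \<and>
     (\<forall>e\<in>edges G.
        continuous_on {0..len G e} (\<lambda>t. f (edge_pt G e t)) \<and>
        (\<forall>a b. 0 \<le> a \<and> a < b \<and> b \<le> len G e \<and>
               (\<forall>c. a < c \<and> c < b \<longrightarrow> Inner e c \<noteq> y \<and> Inner e c \<noteq> z) \<longrightarrow>
               (\<exists>\<alpha> \<beta>. \<forall>t\<in>{a..b}. f (edge_pt G e t) = \<alpha> + \<beta> * t))) \<and>
     (\<forall>p\<in>points G. outflow G f p = (if p = y then -1 else 0) + (if p = z then 1 else 0))"

text \<open>j G z x y = j_z(x,y): voltage at x when a unit current enters at y and exits at z,
with reference voltage 0 at z.\<close>

definition jfun :: "('v,'e) mgraph \<Rightarrow> ('v,'e) pt \<Rightarrow> ('v,'e) pt \<Rightarrow> ('v,'e) pt \<Rightarrow> real" where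
  "jfun G z x y = (THE f. is_voltage G y z f) x"

definition resist :: "('v,'e) mgraph \<Rightarrow> ('v,'e) pt \<Rightarrow> ('v,'e) pt \<Rightarrow> real" where
  "resist G x y = jfun G y x x"

end

theory Submission
  imports Defs "Jordan_Normal_Form.Determinant"
begin

text \<open>
  The voltage for a unit current from y to z is the affine interpolation of its vertex values,
  corrected by a tent on the edge of an interior source; the vertex values solve a discrete
  Laplace equation, which on a connected graph is solvable and unique up to a constant.
  Energy and symmetry of the Laplacian give nonnegativity of resistances and reciprocity.

  The length of e is varied through \<Gamma> - e. Let \<phi> be the voltage on \<Gamma> - e for the current
  from s to t, g the one for the current from q to p, and R the resistance between p and q.
  Adding to \<phi> the multiple of g that makes Kirchhoff's law hold at p and q once an edge of
  length l joins them, and extending affinely over that edge, gives the voltage on the graph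
  with e of length l; by reciprocity \<phi>(p) - \<phi>(q) = g(t) - g(s), whence
  r_l(s,t) = r_H(s,t) - (g(s) - g(t))^2 / (l + R) with H = \<Gamma> - e, and the case L' is
  subtracted from the case L.
  If e is a bridge, the indicator \<chi> of the component of p in \<Gamma> - e is harmonic away
  from e, the current through e equals \<chi>(s) - \<chi>(t), and adding (L - L') times this
  current times \<chi> to the voltage of \<Gamma>' yields the voltage of \<Gamma>.
\<close>

section \<open>Square linear systems\<close>

lemma mat_vec_solvable_if_kernel_trivial:
  fixes A :: "'a :: field mat"
  assumes A: "A \<in> carrier_mat n n"
    and ker: "\<And>v. v \<in> carrier_vec n \<Longrightarrow> A *\<^sub>v v = 0\<^sub>v n \<Longrightarrow> v = 0\<^sub>v n"
    and b: "b \<in> carrier_vec n"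
  obtains x where "x \<in> carrier_vec n" "A *\<^sub>v x = b"
proof -
  have "det A \<noteq> 0" using det_0_iff_vec_prod_zero_field[OF A] ker by blast
  then have "A \<in> Units (ring_mat TYPE('a) n ())" by (rule det_non_zero_imp_unit[OF A])
  then obtain B where B: "B \<in> carrier_mat n n" "A * B = 1\<^sub>m n"
    unfolding Units_def by (auto simp: ring_mat_simps)
  show ?thesis
  proof
    show "B *\<^sub>v b \<in> carrier_vec n" using B b by simp
    have "A *\<^sub>v (B *\<^sub>v b) = (A * B) *\<^sub>v b" using A B(1) b by simp
    also have "\<dots> = b" unfolding B(2) using b by simp
    finally show "A *\<^sub>v (B *\<^sub>v b) = b" .
  qed
qed

lemma finite_linear_system_solvable:
  fixes c :: "'v \<Rightarrow> 'v \<Rightarrow> 'a :: field"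
  assumes V: "finite V"
    and inj: "\<And>x. \<forall>u\<in>V. (\<Sum>w\<in>V. c u w * x w) = 0 \<Longrightarrow> \<forall>u\<in>V. x u = 0"
  shows "\<exists>x. \<forall>u\<in>V. (\<Sum>w\<in>V. c u w * x w) = b u"
proof -
  obtain xs where xs: "set xs = V" "distinct xs" using finite_distinct_list[OF V] by blast
  define n where "n = length xs"
  have bij: "bij_betw ((!) xs) {..<n} V"
    using xs unfolding n_def by (simp add: bij_betw_nth lessThan_atLeast0)
  define idx where "idx = inv_into {..<n} ((!) xs)"
  have idx: "idx (xs ! j) = j" if "j < n" for j
    unfolding idx_def using bij that by (simp add: bij_betw_def inv_into_f_f)
  have reindex: "(\<Sum>w\<in>V. F w) = (\<Sum>j<n. F (xs ! j))" for F :: "'v \<Rightarrow> 'a"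
    using sum.reindex_bij_betw[OF bij, of F] by simp
  define A where "A = mat n n (\<lambda>(i, j). c (xs ! i) (xs ! j))"
  have A: "A \<in> carrier_mat n n" unfolding A_def by simp
  have system: "(\<Sum>w\<in>V. c (xs ! i) w * v $ idx w) = (A *\<^sub>v v) $ i"
    if "i < n" "v \<in> carrier_vec n" for i v
    using that unfolding reindex A_def
    by (simp add: idx scalar_prod_def row_def lessThan_atLeast0)
  have V_nth: "u \<in> V \<Longrightarrow> \<exists>i<n. u = xs ! i" for u
    using xs unfolding n_def by (auto simp: in_set_conv_nth)
  have "A *\<^sub>v v = 0\<^sub>v n \<Longrightarrow> v = 0\<^sub>v n" if v: "v \<in> carrier_vec n" for v
  proof -
    assume Av: "A *\<^sub>v v = 0\<^sub>v n"
    have "\<forall>u\<in>V. (\<Sum>w\<in>V. c u w * v $ idx w) = 0"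
      using V_nth system[OF _ v] Av by (metis index_zero_vec(1))
    then have "\<forall>u\<in>V. v $ idx u = 0" by (rule inj)
    then show "v = 0\<^sub>v n" using v xs(1) idx unfolding n_def by (intro eq_vecI) (auto, metis nth_mem)
  qed
  then obtain X where X: "X \<in> carrier_vec n" "A *\<^sub>v X = vec n (\<lambda>i. b (xs ! i))"
    using mat_vec_solvable_if_kernel_trivial[OF A] by (metis vec_carrier)
  have "\<forall>u\<in>V. (\<Sum>w\<in>V. c u w * X $ idx w) = b u"
    using V_nth system[OF _ X(1)] X(2) by auto
  then show ?thesis by (intro exI[of _ "\<lambda>w. X $ idx w"])
qed

text \<open>Unlike mgraph_wf, this is preserved by deleting an edge.\<close>

definition finite_mgraph :: "('v,'e) mgraph \<Rightarrow> bool" where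
  "finite_mgraph G \<longleftrightarrow> finite (verts G) \<and> finite (edges G) \<and>
     (\<forall>e\<in>edges G. fst (ends G e) \<in> verts G \<and> snd (ends G e) \<in> verts G \<and> len G e > 0)"

lemma mgraph_wf_imp_finite_mgraph: "mgraph_wf G \<Longrightarrow> finite_mgraph G"
  unfolding mgraph_wf_def finite_mgraph_def by auto

lemma finite_mgraph_finite:
  assumes "finite_mgraph G"
  shows "finite (verts G)" "finite (edges G)"
  using assms unfolding finite_mgraph_def by auto

lemma finite_mgraph_edge:
  assumes "finite_mgraph G" "e \<in> edges G"
  shows "fst (ends G e) \<in> verts G" "snd (ends G e) \<in> verts G" "len G e > 0"
  using assms unfolding finite_mgraph_def by auto

lemma Vert_in_points [simp]: "Vert v \<in> points G \<longleftrightarrow> v \<in> verts G"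
  unfolding points_def by auto

lemma Inner_in_points [simp]: "Inner e c \<in> points G \<longleftrightarrow> e \<in> edges G \<and> 0 < c \<and> c < len G e"
  unfolding points_def by auto

lemma edge_pt_0 [simp]: "edge_pt G e 0 = Vert (fst (ends G e))"
  unfolding edge_pt_def by simp

lemma edge_pt_len [simp]: "len G e \<noteq> 0 \<Longrightarrow> edge_pt G e (len G e) = Vert (snd (ends G e))"
  unfolding edge_pt_def by simp

lemma edge_pt_Inner: "0 < u \<Longrightarrow> u < len G e \<Longrightarrow> edge_pt G e u = Inner e u"
  unfolding edge_pt_def by simp

lemma edge_pt_in_points:
  assumes "finite_mgraph G" "e \<in> edges G" "0 \<le> u" "u \<le> len G e"
  shows "edge_pt G e u \<in> points G"
  using assms finite_mgraph_edge[OF assms(1,2)] unfolding edge_pt_def by auto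

lemma delete_edge_simps [simp]:
  "verts (delete_edge G e) = verts G" "edges (delete_edge G e) = edges G - {e}"
  "ends (delete_edge G e) = ends G" "len (delete_edge G e) = len G"
  unfolding delete_edge_def by simp_all

lemma set_length_simps [simp]:
  "verts (set_length G e l) = verts G" "edges (set_length G e l) = edges G"
  "ends (set_length G e l) = ends G" "len (set_length G e l) = (len G)(e := l)"
  unfolding set_length_def by simp_all

lemma set_length_len: "set_length G e (len G e) = G"
  unfolding set_length_def by simp

lemma edge_pt_delete_edge [simp]: "edge_pt (delete_edge G e) = edge_pt G"
  by (intro ext) (simp add: edge_pt_def)

lemma edge_pt_set_length_other: "e' \<noteq> e \<Longrightarrow> edge_pt (set_length G e l) e' = edge_pt G e'"
  by (intro ext) (simp add: edge_pt_def)

lemma finite_mgraph_delete_edge: "finite_mgraph G \<Longrightarrow> finite_mgraph (delete_edge G e)"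
  unfolding finite_mgraph_def by auto

lemma mgraph_wf_set_length:
  assumes "mgraph_wf G" "l > 0"
  shows "mgraph_wf (set_length G e l)"
proof -
  have "adj (set_length G e l) = adj G" unfolding adj_def[abs_def] by simp
  then show ?thesis using assms unfolding mgraph_wf_def graph_connected_def vconn_def by auto
qed

lemma mgraph_wf_delete_edge:
  "mgraph_wf G \<Longrightarrow> e \<in> edges G \<Longrightarrow> \<not> is_bridge G e \<Longrightarrow> mgraph_wf (delete_edge G e)"
  unfolding is_bridge_def mgraph_wf_def by auto

lemma points_delete_edge: "p \<in> points (delete_edge G e) \<longleftrightarrow> p \<in> points G \<and> (\<forall>c. p \<noteq> Inner e c)"
  by (cases p) auto

lemma points_set_length:
  assumes "e \<in> edges G"
  shows "p \<in> points (set_length G e l) \<longleftrightarrow>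
           p \<in> points (delete_edge G e) \<or> (\<exists>u. p = Inner e u \<and> 0 < u \<and> u < l)"
  using assms by (cases p) auto

lemma points_delete_edge_set_length:
  "points (delete_edge (set_length G e l) e) = points (delete_edge G e)"
proof -
  have "x \<in> points (delete_edge (set_length G e l) e) \<longleftrightarrow> x \<in> points (delete_edge G e)" for x
    by (cases x) auto
  then show ?thesis by blast
qed

lemma rep_cong: "ends G' = ends G \<Longrightarrow> rep G' = rep G"
proof
  fix x show "ends G' = ends G \<Longrightarrow> rep G' x = rep G x" by (cases x) auto
qed

lemma rep_delete_edge [simp]: "rep (delete_edge G e) = rep G"
  by (rule rep_cong) simp

lemma symp_adj: "symp (adj G)"
  unfolding adj_def symp_def by auto

lemma vconn_sym: "vconn G u w \<Longrightarrow> vconn G w u"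
  unfolding vconn_def by (rule sympD[OF symp_rtranclp[OF symp_adj]])

lemma vconn_trans: "vconn G u w \<Longrightarrow> vconn G w x \<Longrightarrow> vconn G u x"
  unfolding vconn_def by (rule rtranclp_trans)

lemma edge_const_imp_vconn_eq:
  assumes "\<forall>e\<in>edges G. x (fst (ends G e)) = x (snd (ends G e))" "vconn G u w"
  shows "x u = x w"
  using assms(2) unfolding vconn_def
proof (induction rule: rtranclp_induct)
  case (step w w')
  then show ?case using assms(1) unfolding adj_def by force
qed simp

section \<open>One-sided slopes\<close>

lemma Lim_at_right_eventually:
  "eventually (\<lambda>h. f h = c) (at_right (0::real)) \<Longrightarrow> Lim (at_right 0) f = c"
  by (rule tendsto_Lim) (simp_all add: tendsto_eventually)

lemma dslope_right_affine:
  assumes "\<delta> > 0" "\<And>u. t \<le> u \<Longrightarrow> u \<le> t + \<delta> \<Longrightarrow> g u = \<alpha> + \<beta> * u"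
  shows "dslope g t 1 = \<beta>"
  unfolding dslope_def
proof (rule Lim_at_right_eventually)
  show "\<forall>\<^sub>F h in at_right 0. (g (t + 1 * h) - g t) / h = \<beta>"
    using eventually_at_right_real[OF assms(1)]
  proof eventually_elim
    case (elim h)
    then show ?case using assms(2)[of "t + h"] assms(2)[of t] assms(1) by (simp add: field_simps)
  qed
qed

lemma dslope_left_affine:
  assumes "\<delta> > 0" "\<And>u. t - \<delta> \<le> u \<Longrightarrow> u \<le> t \<Longrightarrow> g u = \<alpha> + \<beta> * u"
  shows "dslope g t (-1) = - \<beta>"
  unfolding dslope_def
proof (rule Lim_at_right_eventually)
  show "\<forall>\<^sub>F h in at_right 0. (g (t + -1 * h) - g t) / h = - \<beta>"
    using eventually_at_right_real[OF assms(1)]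
  proof eventually_elim
    case (elim h)
    then show ?case using assms(2)[of "t - h"] assms(2)[of t] assms(1) by (simp add: field_simps)
  qed
qed

lemma dslope_right_cong:
  assumes "\<delta> > 0" "\<And>u. t \<le> u \<Longrightarrow> u \<le> t + \<delta> \<Longrightarrow> g u = g' u"
  shows "dslope g t 1 = dslope g' t 1"
  unfolding dslope_def
proof (rule Lim_cong)
  show "\<forall>\<^sub>F h in at_right 0. (g (t + 1 * h) - g t) / h = (g' (t + 1 * h) - g' t) / h"
    using eventually_at_right_real[OF assms(1)]
    by eventually_elim (use assms in simp)
qed simp

lemma dslope_left_cong:
  assumes "\<delta> > 0" "\<And>u. t - \<delta> \<le> u \<Longrightarrow> u \<le> t \<Longrightarrow> g u = g' u"
  shows "dslope g t (-1) = dslope g' t (-1)"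
  unfolding dslope_def
proof (rule Lim_cong)
  show "\<forall>\<^sub>F h in at_right 0. (g (t + -1 * h) - g t) / h = (g' (t + -1 * h) - g' t) / h"
    using eventually_at_right_real[OF assms(1)]
    by eventually_elim (use assms in simp)
qed simp

lemma dslope_const [simp]: "dslope (\<lambda>_. k) t s = 0"
  unfolding dslope_def by (rule Lim_at_right_eventually) simp

lemma affine_if_no_kinks:
  fixes g :: "real \<Rightarrow> real"
  assumes C: "finite C"
    and aff: "\<And>u v. a \<le> u \<Longrightarrow> u < v \<Longrightarrow> v \<le> b \<Longrightarrow> (\<forall>c\<in>C. \<not> (u < c \<and> c < v)) \<Longrightarrow>
                \<exists>\<alpha> \<beta>. \<forall>x\<in>{u..v}. g x = \<alpha> + \<beta> * x"
    and no_kink: "\<And>c. c \<in> C \<Longrightarrow> a < c \<Longrightarrow> c < b \<Longrightarrow> dslope g c 1 + dslope g c (-1) = 0"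
    and ab: "a < b"
  shows "\<exists>\<alpha> \<beta>. \<forall>x\<in>{a..b}. g x = \<alpha> + \<beta> * x"
  using aff no_kink ab
proof (induction "card {c\<in>C. a < c \<and> c < b}" arbitrary: a rule: less_induct)
  case (less a)
  define K where "K = {c\<in>C. a < c \<and> c < b}"
  show ?case
  proof (cases "K = {}")
    case True
    then show ?thesis using less.prems(1)[of a b] less.prems(3) unfolding K_def by auto
  next
    case False
    have K: "finite K" unfolding K_def using C by simp
    define c0 where "c0 = Min K"
    have c0: "c0 \<in> C" "a < c0" "c0 < b"
      using Min_in[OF K False] unfolding c0_def K_def by auto
    have "c0 \<le> c" if "c \<in> C" "a < c" "c < b" for c
      unfolding c0_def using K that K_def by (intro Min_le) auto
    then obtain a1 b1 where 1: "\<forall>x\<in>{a..c0}. g x = a1 + b1 * x"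
      using less.prems(1)[of a c0] c0 by force
    have "card {c\<in>C. c0 < c \<and> c < b} < card K"
      using K c0 unfolding K_def by (intro psubset_card_mono) auto
    then have "\<exists>\<alpha> \<beta>. \<forall>x\<in>{c0..b}. g x = \<alpha> + \<beta> * x"
      using less.prems c0 unfolding K_def by (intro less.hyps) auto
    then obtain a2 b2 where 2: "\<forall>x\<in>{c0..b}. g x = a2 + b2 * x" by blast
    have "dslope g c0 1 = b2" using 2 c0 by (intro dslope_right_affine[of "b - c0" _ _ a2]) auto
    moreover have "dslope g c0 (-1) = - b1" using 1 c0 by (intro dslope_left_affine[of "c0 - a" _ _ a1]) auto
    ultimately have b: "b1 = b2" using less.prems(2)[OF c0] by simp
    moreover have "a1 + b1 * c0 = a2 + b2 * c0" using 1[rule_format, of c0] 2[rule_format, of c0] c0 by simp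
    ultimately have a: "a1 = a2" by simp
    have "g x = a1 + b1 * x" if "x \<in> {a..b}" for x
      using 1 2 that a b by (cases "x \<le> c0") auto
    then show ?thesis by blast
  qed
qed

section \<open>Piecewise affine functions\<close>

definition piecewise_affine_on_edge ::
    "('v,'e) mgraph \<Rightarrow> ('v,'e) pt set \<Rightarrow> (('v,'e) pt \<Rightarrow> real) \<Rightarrow> 'e \<Rightarrow> bool" where
  "piecewise_affine_on_edge G S f e \<longleftrightarrow>
     continuous_on {0..len G e} (\<lambda>t. f (edge_pt G e t)) \<and>
     (\<forall>a b. 0 \<le> a \<and> a < b \<and> b \<le> len G e \<and> (\<forall>c. a < c \<and> c < b \<longrightarrow> Inner e c \<notin> S) \<longrightarrow>
        (\<exists>\<alpha> \<beta>. \<forall>t\<in>{a..b}. f (edge_pt G e t) = \<alpha> + \<beta> * t))"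

definition piecewise_affine :: "('v,'e) mgraph \<Rightarrow> ('v,'e) pt set \<Rightarrow> (('v,'e) pt \<Rightarrow> real) \<Rightarrow> bool" where
  "piecewise_affine G S f \<longleftrightarrow> (\<forall>e\<in>edges G. piecewise_affine_on_edge G S f e)"

lemma finite_kinks_avoidable:
  fixes t :: real
  assumes "finite S"
  obtains \<delta> where "\<delta> > 0" "\<And>c. c \<noteq> t \<Longrightarrow> \<bar>c - t\<bar> < \<delta> \<Longrightarrow> Inner e c \<notin> S"
proof
  define D where "D = (\<lambda>c. \<bar>c - t\<bar>) ` {c. Inner e c \<in> S \<and> c \<noteq> t}"
  have "finite {c. Inner e c \<in> S}"
    using finite_vimageI[OF assms, of "Inner e"] by (simp add: vimage_def inj_on_def)
  then have D: "finite (insert 1 D)" unfolding D_def by simp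
  show "Min (insert 1 D) > 0" using D by (subst Min_gr_iff) (auto simp: D_def)
  fix c assume "c \<noteq> t" "\<bar>c - t\<bar> < Min (insert 1 D)"
  moreover have "Inner e c \<in> S \<Longrightarrow> c \<noteq> t \<Longrightarrow> Min (insert 1 D) \<le> \<bar>c - t\<bar>"
    using D by (intro Min_le) (auto simp: D_def)
  ultimately show "Inner e c \<notin> S" by force
qed

lemma piecewise_affine_right:
  assumes "piecewise_affine G S f" "finite S" "e \<in> edges G" "0 \<le> t" "t < len G e"
  obtains \<delta> \<alpha> \<beta> where "\<delta> > 0" "\<And>u. t \<le> u \<Longrightarrow> u \<le> t + \<delta> \<Longrightarrow> f (edge_pt G e u) = \<alpha> + \<beta> * u"
proof -
  obtain \<delta> where \<delta>: "\<delta> > 0" "\<And>c. c \<noteq> t \<Longrightarrow> \<bar>c - t\<bar> < \<delta> \<Longrightarrow> Inner e c \<notin> S"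
    using finite_kinks_avoidable[OF assms(2)] by blast
  let ?\<delta> = "min \<delta> (len G e - t)"
  have "\<forall>c. t < c \<and> c < t + ?\<delta> \<longrightarrow> Inner e c \<notin> S" using \<delta> by auto
  moreover have "t < t + ?\<delta>" "t + ?\<delta> \<le> len G e" using \<delta>(1) assms(5) by auto
  ultimately obtain \<alpha> \<beta> where "\<forall>u\<in>{t..t + ?\<delta>}. f (edge_pt G e u) = \<alpha> + \<beta> * u"
    using assms(1,3,4) unfolding piecewise_affine_def piecewise_affine_on_edge_def by blast
  then show ?thesis using that[of ?\<delta>] \<delta>(1) assms(5) by auto
qed

lemma piecewise_affine_left:
  assumes "piecewise_affine G S f" "finite S" "e \<in> edges G" "0 < t" "t \<le> len G e"
  obtains \<delta> \<alpha> \<beta> where "\<delta> > 0" "\<And>u. t - \<delta> \<le> u \<Longrightarrow> u \<le> t \<Longrightarrow> f (edge_pt G e u) = \<alpha> + \<beta> * u"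
proof -
  obtain \<delta> where \<delta>: "\<delta> > 0" "\<And>c. c \<noteq> t \<Longrightarrow> \<bar>c - t\<bar> < \<delta> \<Longrightarrow> Inner e c \<notin> S"
    using finite_kinks_avoidable[OF assms(2)] by blast
  let ?\<delta> = "min \<delta> t"
  have "\<forall>c. t - ?\<delta> < c \<and> c < t \<longrightarrow> Inner e c \<notin> S" using \<delta> by auto
  moreover have "0 \<le> t - ?\<delta>" "t - ?\<delta> < t" using \<delta>(1) assms(4) by auto
  ultimately obtain \<alpha> \<beta> where "\<forall>u\<in>{t - ?\<delta>..t}. f (edge_pt G e u) = \<alpha> + \<beta> * u"
    using assms(1,3,5) unfolding piecewise_affine_def piecewise_affine_on_edge_def by blast
  then show ?thesis using that[of ?\<delta>] \<delta>(1) assms(4) by auto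
qed

lemma dslope_lincomb_right:
  assumes "piecewise_affine G S f" "piecewise_affine G S g" "finite S" "e \<in> edges G"
    "0 \<le> t" "t < len G e"
  shows "dslope (\<lambda>u. a * f (edge_pt G e u) + b * g (edge_pt G e u) + k) t 1
       = a * dslope (\<lambda>u. f (edge_pt G e u)) t 1 + b * dslope (\<lambda>u. g (edge_pt G e u)) t 1"
proof -
  obtain d1 a1 b1 where 1: "d1 > 0" "\<And>u. t \<le> u \<Longrightarrow> u \<le> t + d1 \<Longrightarrow> f (edge_pt G e u) = a1 + b1 * u"
    using piecewise_affine_right[OF assms(1,3-6)] by blast
  obtain d2 a2 b2 where 2: "d2 > 0" "\<And>u. t \<le> u \<Longrightarrow> u \<le> t + d2 \<Longrightarrow> g (edge_pt G e u) = a2 + b2 * u"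
    using piecewise_affine_right[OF assms(2,3-6)] by blast
  have "dslope (\<lambda>u. f (edge_pt G e u)) t 1 = b1" using 1 by (rule dslope_right_affine)
  moreover have "dslope (\<lambda>u. g (edge_pt G e u)) t 1 = b2" using 2 by (rule dslope_right_affine)
  moreover have "dslope (\<lambda>u. a * f (edge_pt G e u) + b * g (edge_pt G e u) + k) t 1 = a * b1 + b * b2"
    using 1 2 by (intro dslope_right_affine[of "min d1 d2" _ _ "a * a1 + b * a2 + k"])
      (auto simp: algebra_simps)
  ultimately show ?thesis by simp
qed

lemma dslope_lincomb_left:
  assumes "piecewise_affine G S f" "piecewise_affine G S g" "finite S" "e \<in> edges G"
    "0 < t" "t \<le> len G e"
  shows "dslope (\<lambda>u. a * f (edge_pt G e u) + b * g (edge_pt G e u) + k) t (-1)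
       = a * dslope (\<lambda>u. f (edge_pt G e u)) t (-1) + b * dslope (\<lambda>u. g (edge_pt G e u)) t (-1)"
proof -
  obtain d1 a1 b1 where 1: "d1 > 0" "\<And>u. t - d1 \<le> u \<Longrightarrow> u \<le> t \<Longrightarrow> f (edge_pt G e u) = a1 + b1 * u"
    using piecewise_affine_left[OF assms(1,3-6)] by blast
  obtain d2 a2 b2 where 2: "d2 > 0" "\<And>u. t - d2 \<le> u \<Longrightarrow> u \<le> t \<Longrightarrow> g (edge_pt G e u) = a2 + b2 * u"
    using piecewise_affine_left[OF assms(2,3-6)] by blast
  have "dslope (\<lambda>u. f (edge_pt G e u)) t (-1) = - b1" using 1 by (rule dslope_left_affine)
  moreover have "dslope (\<lambda>u. g (edge_pt G e u)) t (-1) = - b2" using 2 by (rule dslope_left_affine)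
  moreover have "dslope (\<lambda>u. a * f (edge_pt G e u) + b * g (edge_pt G e u) + k) t (-1) = - (a * b1 + b * b2)"
    using 1 2 by (intro dslope_left_affine[of "min d1 d2" _ _ "a * a1 + b * a2 + k"])
      (auto simp: algebra_simps)
  ultimately show ?thesis by simp
qed

lemma outflow_lincomb:
  assumes G: "finite_mgraph G" and f: "piecewise_affine G S f" and g: "piecewise_affine G S g"
    and S: "finite S" and p: "p \<in> points G"
  shows "outflow G (\<lambda>x. a * f x + b * g x + k) p = a * outflow G f p + b * outflow G g p"
proof (cases p)
  case (Vert v)
  have "(\<Sum>e\<in>{e\<in>edges G. fst (ends G e) = v}. dslope (\<lambda>u. a * f (edge_pt G e u) + b * g (edge_pt G e u) + k) 0 1)
     = a * (\<Sum>e\<in>{e\<in>edges G. fst (ends G e) = v}. dslope (\<lambda>u. f (edge_pt G e u)) 0 1)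
     + b * (\<Sum>e\<in>{e\<in>edges G. fst (ends G e) = v}. dslope (\<lambda>u. g (edge_pt G e u)) 0 1)"
    unfolding sum_distrib_left sum.distrib[symmetric]
    by (rule sum.cong[OF refl], rule dslope_lincomb_right[OF f g S]) (auto dest: finite_mgraph_edge[OF G])
  moreover have "(\<Sum>e\<in>{e\<in>edges G. snd (ends G e) = v}. dslope (\<lambda>u. a * f (edge_pt G e u) + b * g (edge_pt G e u) + k) (len G e) (-1))
     = a * (\<Sum>e\<in>{e\<in>edges G. snd (ends G e) = v}. dslope (\<lambda>u. f (edge_pt G e u)) (len G e) (-1))
     + b * (\<Sum>e\<in>{e\<in>edges G. snd (ends G e) = v}. dslope (\<lambda>u. g (edge_pt G e u)) (len G e) (-1))"
    unfolding sum_distrib_left sum.distrib[symmetric]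
    by (rule sum.cong[OF refl], rule dslope_lincomb_left[OF f g S]) (auto dest: finite_mgraph_edge[OF G])
  ultimately show ?thesis unfolding Vert outflow_def pt.case by (simp add: algebra_simps)
next
  case (Inner e t)
  with p have "e \<in> edges G" "0 < t" "t < len G e" by auto
  then show ?thesis unfolding Inner outflow_def
    using dslope_lincomb_right[OF f g S, of e t] dslope_lincomb_left[OF f g S, of e t]
    by (simp add: algebra_simps)
qed

lemma outflow_add:
  assumes "finite_mgraph G" "piecewise_affine G S f" "piecewise_affine G S g" "finite S" "p \<in> points G"
  shows "outflow G (\<lambda>x. f x + g x) p = outflow G f p + outflow G g p"
  using outflow_lincomb[OF assms, of 1 1 0] by simp

lemma outflow_diff:
  assumes "finite_mgraph G" "piecewise_affine G S f" "piecewise_affine G S g" "finite S" "p \<in> points G"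
  shows "outflow G (\<lambda>x. f x - g x) p = outflow G f p - outflow G g p"
  using outflow_lincomb[OF assms, of 1 "-1" 0] by simp

lemma piecewise_affine_lincomb:
  assumes "piecewise_affine G S f" "piecewise_affine G S g"
  shows "piecewise_affine G S (\<lambda>x. a * f x + b * g x + k)"
  unfolding piecewise_affine_def piecewise_affine_on_edge_def
proof (intro ballI conjI allI impI)
  fix e assume e: "e \<in> edges G"
  show "continuous_on {0..len G e} (\<lambda>t. a * f (edge_pt G e t) + b * g (edge_pt G e t) + k)"
    using assms e unfolding piecewise_affine_def piecewise_affine_on_edge_def
    by (intro continuous_intros) auto
  fix a' b'
  assume ab: "0 \<le> a' \<and> a' < b' \<and> b' \<le> len G e \<and> (\<forall>c. a' < c \<and> c < b' \<longrightarrow> Inner e c \<notin> S)"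
  obtain a1 b1 where 1: "\<forall>t\<in>{a'..b'}. f (edge_pt G e t) = a1 + b1 * t"
    using assms(1) e ab unfolding piecewise_affine_def piecewise_affine_on_edge_def by blast
  obtain a2 b2 where 2: "\<forall>t\<in>{a'..b'}. g (edge_pt G e t) = a2 + b2 * t"
    using assms(2) e ab unfolding piecewise_affine_def piecewise_affine_on_edge_def by blast
  show "\<exists>\<alpha> \<beta>. \<forall>t\<in>{a'..b'}. a * f (edge_pt G e t) + b * g (edge_pt G e t) + k = \<alpha> + \<beta> * t"
    using 1 2 by (intro exI[of _ "a * a1 + b * a2 + k"] exI[of _ "a * b1 + b * b2"])
      (auto simp: algebra_simps)
qed

lemma piecewise_affine_add:
  "piecewise_affine G S f \<Longrightarrow> piecewise_affine G S g \<Longrightarrow> piecewise_affine G S (\<lambda>x. f x + g x)"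
  using piecewise_affine_lincomb[of G S f g 1 1 0] by simp

lemma piecewise_affine_diff:
  "piecewise_affine G S f \<Longrightarrow> piecewise_affine G S g \<Longrightarrow> piecewise_affine G S (\<lambda>x. f x - g x)"
  using piecewise_affine_lincomb[of G S f g 1 "-1" 0] by simp

lemma piecewise_affine_mono:
  assumes "piecewise_affine G S f" "\<And>e c. Inner e c \<in> S \<Longrightarrow> Inner e c \<in> S'"
  shows "piecewise_affine G S' f"
  using assms unfolding piecewise_affine_def piecewise_affine_on_edge_def by blast

lemma piecewise_affine_on_edge_affine:
  assumes "\<And>t. 0 \<le> t \<Longrightarrow> t \<le> len G e \<Longrightarrow> f (edge_pt G e t) = \<alpha> + \<beta> * t"
  shows "piecewise_affine_on_edge G S f e"
  unfolding piecewise_affine_on_edge_def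
proof (intro conjI allI impI)
  have "continuous_on {0..len G e} (\<lambda>t. f (edge_pt G e t)) \<longleftrightarrow>
          continuous_on {0..len G e} (\<lambda>t. \<alpha> + \<beta> * t)"
    by (rule continuous_on_cong) (auto simp: assms)
  then show "continuous_on {0..len G e} (\<lambda>t. f (edge_pt G e t))"
    by (simp add: continuous_intros)
  fix a b assume "0 \<le> a \<and> a < b \<and> b \<le> len G e \<and> (\<forall>c. a < c \<and> c < b \<longrightarrow> Inner e c \<notin> S)"
  then show "\<exists>\<alpha> \<beta>. \<forall>t\<in>{a..b}. f (edge_pt G e t) = \<alpha> + \<beta> * t"
    using assms by (intro exI[of _ \<alpha>] exI[of _ \<beta>]) auto
qed

lemma piecewise_affine_const: "piecewise_affine G S (\<lambda>_. k)"
  unfolding piecewise_affine_def by (auto intro: piecewise_affine_on_edge_affine[of _ _ _ k 0])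

lemma piecewise_affine_on_edge_cong:
  assumes "len G' e = len G e"
    and eq: "\<And>t. 0 \<le> t \<Longrightarrow> t \<le> len G e \<Longrightarrow> f' (edge_pt G' e t) = f (edge_pt G e t)"
    and "piecewise_affine_on_edge G S f e"
  shows "piecewise_affine_on_edge G' S f' e"
proof -
  have cont: "continuous_on {0..len G e} (\<lambda>t. f (edge_pt G e t))"
    and aff: "\<And>a b. 0 \<le> a \<and> a < b \<and> b \<le> len G e \<and> (\<forall>c. a < c \<and> c < b \<longrightarrow> Inner e c \<notin> S) \<Longrightarrow>
                \<exists>\<alpha> \<beta>. \<forall>t\<in>{a..b}. f (edge_pt G e t) = \<alpha> + \<beta> * t"
    using assms(3) unfolding piecewise_affine_on_edge_def by blast+
  have "continuous_on {0..len G e} (\<lambda>t. f' (edge_pt G' e t)) \<longleftrightarrow>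
          continuous_on {0..len G e} (\<lambda>t. f (edge_pt G e t))"
    by (rule continuous_on_cong) (auto simp: eq)
  with cont have "continuous_on {0..len G e} (\<lambda>t. f' (edge_pt G' e t))" by simp
  moreover have "\<exists>\<alpha> \<beta>. \<forall>t\<in>{a..b}. f' (edge_pt G' e t) = \<alpha> + \<beta> * t"
    if ab: "0 \<le> a \<and> a < b \<and> b \<le> len G e \<and> (\<forall>c. a < c \<and> c < b \<longrightarrow> Inner e c \<notin> S)" for a b
  proof -
    obtain \<alpha> \<beta> where "\<forall>t\<in>{a..b}. f (edge_pt G e t) = \<alpha> + \<beta> * t" using aff[OF ab] by blast
    then show ?thesis using ab eq by (intro exI[of _ \<alpha>] exI[of _ \<beta>]) auto
  qed
  ultimately show ?thesis unfolding piecewise_affine_on_edge_def assms(1) by blast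
qed

lemma piecewise_affine_cong:
  assumes G: "finite_mgraph G" and eq: "\<And>p. p \<in> points G \<Longrightarrow> f p = g p"
    and f: "piecewise_affine G S f"
  shows "piecewise_affine G S g"
  unfolding piecewise_affine_def
proof
  fix e assume e: "e \<in> edges G"
  have "g (edge_pt G e t) = f (edge_pt G e t)" if "0 \<le> t" "t \<le> len G e" for t
    using eq edge_pt_in_points[OF G e that] by simp
  moreover have "piecewise_affine_on_edge G S f e" using f e unfolding piecewise_affine_def by blast
  ultimately show "piecewise_affine_on_edge G S g e" by (rule piecewise_affine_on_edge_cong[OF refl])
qed

lemma outflow_cong:
  assumes G: "finite_mgraph G" and eq: "\<And>p. p \<in> points G \<Longrightarrow> f p = g p" and p: "p \<in> points G"
  shows "outflow G f p = outflow G g p"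
proof -
  have eq': "f (edge_pt G e t) = g (edge_pt G e t)" if "e \<in> edges G" "0 \<le> t" "t \<le> len G e" for e t
    using eq edge_pt_in_points[OF G that] by auto
  show ?thesis
  proof (cases p)
    case (Vert v)
    have "dslope (\<lambda>u. f (edge_pt G e u)) 0 1 = dslope (\<lambda>u. g (edge_pt G e u)) 0 1"
      "dslope (\<lambda>u. f (edge_pt G e u)) (len G e) (-1) = dslope (\<lambda>u. g (edge_pt G e u)) (len G e) (-1)"
      if "e \<in> edges G" for e
      using finite_mgraph_edge[OF G that]
      by (intro dslope_right_cong[of "len G e"] dslope_left_cong[of "len G e"]; auto intro: eq'[OF that])+
    then show ?thesis unfolding Vert outflow_def by simp
  next
    case (Inner e t)
    with p have e: "e \<in> edges G" "0 < t" "t < len G e" by auto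
    have "dslope (\<lambda>u. f (edge_pt G e u)) t 1 = dslope (\<lambda>u. g (edge_pt G e u)) t 1"
      using e by (intro dslope_right_cong[of "len G e - t"]) (auto intro: eq')
    moreover have "dslope (\<lambda>u. f (edge_pt G e u)) t (-1) = dslope (\<lambda>u. g (edge_pt G e u)) t (-1)"
      using e by (intro dslope_left_cong[of t]) (auto intro: eq')
    ultimately show ?thesis unfolding Inner outflow_def by simp
  qed
qed

lemma outflow_Inner_affine:
  assumes "0 < u" "\<delta> > 0"
    "\<And>t. u - \<delta> \<le> t \<Longrightarrow> t \<le> u + \<delta> \<Longrightarrow> f (edge_pt G e t) = \<alpha> + \<beta> * t"
  shows "outflow G f (Inner e u) = 0"
proof -
  have "dslope (\<lambda>t. f (edge_pt G e t)) u 1 = \<beta>"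
    using assms(2,3) by (intro dslope_right_affine[of \<delta> _ _ \<alpha>]) auto
  moreover have "dslope (\<lambda>t. f (edge_pt G e t)) u (-1) = - \<beta>"
    using assms(2,3) by (intro dslope_left_affine[of \<delta> _ _ \<alpha>]) auto
  ultimately show ?thesis unfolding outflow_def by simp
qed

lemma edge_affine_interpolates_ends:
  assumes "\<forall>x\<in>{0..len G e}. f (edge_pt G e x) = \<alpha> + \<beta> * x" "len G e > 0"
    "0 \<le> u" "u \<le> len G e"
  shows "f (edge_pt G e u) = f (Vert (fst (ends G e)))
           + (f (Vert (snd (ends G e))) - f (Vert (fst (ends G e)))) * u / len G e"
proof -
  have "f (Vert (fst (ends G e))) = \<alpha>" using assms(1)[rule_format, of 0] assms(2) by simp
  moreover have "f (Vert (snd (ends G e))) = \<alpha> + \<beta> * len G e"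
    using assms(1)[rule_format, of "len G e"] assms(2) by simp
  ultimately show ?thesis using assms by (auto simp: field_simps)
qed

lemma piecewise_affine_edge_affine:
  assumes "piecewise_affine G S f" "e \<in> edges G" "\<forall>c. Inner e c \<notin> S" "len G e > 0"
    "0 \<le> u" "u \<le> len G e"
  shows "f (edge_pt G e u) = f (Vert (fst (ends G e)))
           + (f (Vert (snd (ends G e))) - f (Vert (fst (ends G e)))) * u / len G e"
proof -
  obtain \<alpha> \<beta> where "\<forall>t\<in>{0..len G e}. f (edge_pt G e t) = \<alpha> + \<beta> * t"
    using assms(1-4) unfolding piecewise_affine_def piecewise_affine_on_edge_def by blast
  then show ?thesis by (rule edge_affine_interpolates_ends[OF _ assms(4-6)])
qed

section \<open>Interpolation and the graph Laplacian\<close>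

definition interp :: "('v,'e) mgraph \<Rightarrow> ('v \<Rightarrow> real) \<Rightarrow> ('v,'e) pt \<Rightarrow> real" where
  "interp G x p = (case p of Vert v \<Rightarrow> x v
     | Inner e t \<Rightarrow> x (fst (ends G e)) + (x (snd (ends G e)) - x (fst (ends G e))) * t / len G e)"

definition laplacian :: "('v,'e) mgraph \<Rightarrow> ('v \<Rightarrow> real) \<Rightarrow> 'v \<Rightarrow> real" where
  "laplacian G x v =
     (\<Sum>e\<in>{e\<in>edges G. fst (ends G e) = v}. (x (snd (ends G e)) - x v) / len G e) +
     (\<Sum>e\<in>{e\<in>edges G. snd (ends G e) = v}. (x (fst (ends G e)) - x v) / len G e)"

lemma interp_Vert [simp]: "interp G x (Vert v) = x v"
  unfolding interp_def by simp

lemma interp_edge_pt: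
  assumes "len G e > 0" "0 \<le> t" "t \<le> len G e"
  shows "interp G x (edge_pt G e t)
           = x (fst (ends G e)) + (x (snd (ends G e)) - x (fst (ends G e))) * t / len G e"
  using assms unfolding edge_pt_def interp_def by auto

lemma interp_add_const: "interp G (\<lambda>v. x v + k) p = interp G x p + k"
  unfolding interp_def by (simp split: pt.split add: algebra_simps)

lemma interp_eq_rep:
  assumes "\<And>e u. x = Inner e u \<Longrightarrow> \<chi> (fst (ends G e)) = \<chi> (snd (ends G e))"
  shows "interp G \<chi> x = \<chi> (rep G x)"
  using assms unfolding interp_def by (cases x) auto

lemma interp_piecewise_affine:
  assumes "finite_mgraph G"
  shows "piecewise_affine G S (interp G x)"
  unfolding piecewise_affine_def
proof
  fix e assume e: "e \<in> edges G"
  have "len G e > 0" using finite_mgraph_edge[OF assms e] by simp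
  then show "piecewise_affine_on_edge G S (interp G x) e"
    by (intro piecewise_affine_on_edge_affine[where \<alpha> = "x (fst (ends G e))"
          and \<beta> = "(x (snd (ends G e)) - x (fst (ends G e))) / len G e"]) (simp add: interp_edge_pt)
qed

lemma outflow_Vert_edgewise_affine:
  assumes G: "finite_mgraph G"
    and aff: "\<And>e t. e \<in> edges G \<Longrightarrow> 0 \<le> t \<Longrightarrow> t \<le> len G e \<Longrightarrow>
       f (edge_pt G e t) = f (Vert (fst (ends G e)))
         + (f (Vert (snd (ends G e))) - f (Vert (fst (ends G e)))) * t / len G e"
  shows "outflow G f (Vert v) = laplacian G (\<lambda>w. f (Vert w)) v"
proof -
  have right: "dslope (\<lambda>u. f (edge_pt G e u)) 0 1
                = (f (Vert (snd (ends G e))) - f (Vert (fst (ends G e)))) / len G e"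
    if "e \<in> edges G" for e
    using finite_mgraph_edge[OF G that] aff[OF that]
    by (intro dslope_right_affine[of "len G e" _ _ "f (Vert (fst (ends G e)))"]) (auto simp: field_simps)
  have left: "dslope (\<lambda>u. f (edge_pt G e u)) (len G e) (-1)
                = (f (Vert (fst (ends G e))) - f (Vert (snd (ends G e)))) / len G e"
    if "e \<in> edges G" for e
  proof -
    have "dslope (\<lambda>u. f (edge_pt G e u)) (len G e) (-1)
            = - ((f (Vert (snd (ends G e))) - f (Vert (fst (ends G e)))) / len G e)"
      using finite_mgraph_edge[OF G that] aff[OF that]
      by (intro dslope_left_affine[of "len G e" _ _ "f (Vert (fst (ends G e)))"]) (auto simp: field_simps)
    then show ?thesis by (simp add: minus_divide_left)
  qed
  show ?thesis unfolding outflow_def laplacian_def pt.case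
    by (intro arg_cong2[where f = "(+)"] sum.cong refl) (auto simp: right left)
qed

lemma outflow_interp:
  assumes G: "finite_mgraph G" and p: "p \<in> points G"
  shows "outflow G (interp G x) p = (case p of Vert v \<Rightarrow> laplacian G x v | Inner e t \<Rightarrow> 0)"
proof (cases p)
  case (Vert v)
  have "outflow G (interp G x) (Vert v) = laplacian G (\<lambda>w. interp G x (Vert w)) v"
    using G by (intro outflow_Vert_edgewise_affine) (auto simp: interp_edge_pt finite_mgraph_edge)
  then show ?thesis using Vert by simp
next
  case (Inner e u)
  with p have e: "e \<in> edges G" "0 < u" "u < len G e" by auto
  have "outflow G (interp G x) (Inner e u) = 0"
    using e by (intro outflow_Inner_affine[where \<delta> = "min u (len G e - u)" and \<alpha> = "x (fst (ends G e))"
          and \<beta> = "(x (snd (ends G e)) - x (fst (ends G e))) / len G e"]) (auto simp: interp_edge_pt)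
  then show ?thesis using Inner by simp
qed

lemma sum_group_by_end:
  assumes "finite E" "finite V" "\<forall>e\<in>E. \<pi> e \<in> V"
  shows "(\<Sum>v\<in>V. \<Sum>e\<in>{e\<in>E. \<pi> e = v}. F e v) = (\<Sum>e\<in>E. F e (\<pi> e))"
proof -
  have "(\<Sum>v\<in>V. \<Sum>e\<in>{e\<in>E. \<pi> e = v}. F e v) = (\<Sum>v\<in>V. \<Sum>e\<in>{e\<in>E. \<pi> e = v}. F e (\<pi> e))"
    by (intro sum.cong refl) auto
  also have "\<dots> = (\<Sum>e\<in>E. F e (\<pi> e))" using assms by (intro sum.group) auto
  finally show ?thesis .
qed

lemma laplacian_green:
  assumes G: "finite_mgraph G"
  shows "(\<Sum>v\<in>verts G. h v * laplacian G x v) =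
    - (\<Sum>e\<in>edges G. (h (snd (ends G e)) - h (fst (ends G e)))
                     * (x (snd (ends G e)) - x (fst (ends G e))) / len G e)"
proof -
  note fin = finite_mgraph_finite(2,1)[OF G]
  have ends: "\<forall>e\<in>edges G. fst (ends G e) \<in> verts G" "\<forall>e\<in>edges G. snd (ends G e) \<in> verts G"
    using finite_mgraph_edge[OF G] by auto
  have "(\<Sum>v\<in>verts G. h v * laplacian G x v)
     = (\<Sum>v\<in>verts G. \<Sum>e\<in>{e\<in>edges G. fst (ends G e) = v}. h v * ((x (snd (ends G e)) - x v) / len G e))
     + (\<Sum>v\<in>verts G. \<Sum>e\<in>{e\<in>edges G. snd (ends G e) = v}. h v * ((x (fst (ends G e)) - x v) / len G e))"
    unfolding laplacian_def by (simp add: sum_distrib_left sum.distrib distrib_left)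
  also have "\<dots> = (\<Sum>e\<in>edges G. h (fst (ends G e)) * ((x (snd (ends G e)) - x (fst (ends G e))) / len G e))
     + (\<Sum>e\<in>edges G. h (snd (ends G e)) * ((x (fst (ends G e)) - x (snd (ends G e))) / len G e))"
    using sum_group_by_end[OF fin ends(1), of "\<lambda>e v. h v * ((x (snd (ends G e)) - x v) / len G e)"]
      sum_group_by_end[OF fin ends(2), of "\<lambda>e v. h v * ((x (fst (ends G e)) - x v) / len G e)"]
    by simp
  also have "\<dots> = - (\<Sum>e\<in>edges G. (h (snd (ends G e)) - h (fst (ends G e)))
                     * (x (snd (ends G e)) - x (fst (ends G e))) / len G e)"
    unfolding sum.distrib[symmetric] sum_negf[symmetric]
    by (intro sum.cong refl, rename_tac e, case_tac "len G e = 0") (simp_all add: field_simps)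
  finally show ?thesis .
qed

lemma laplacian_symmetric:
  "finite_mgraph G \<Longrightarrow> (\<Sum>v\<in>verts G. h v * laplacian G x v) = (\<Sum>v\<in>verts G. x v * laplacian G h v)"
  by (simp add: laplacian_green mult.commute)

lemma sum_laplacian: "finite_mgraph G \<Longrightarrow> (\<Sum>v\<in>verts G. laplacian G x v) = 0"
  using laplacian_green[of G "\<lambda>_. 1" x] by simp

lemma laplacian_add_const: "laplacian G (\<lambda>v. x v + k) = laplacian G x"
  unfolding laplacian_def by (intro ext) simp

lemma laplacian_edge_const:
  "\<forall>e\<in>edges G. \<chi> (fst (ends G e)) = \<chi> (snd (ends G e)) \<Longrightarrow> laplacian G \<chi> v = 0"
  unfolding laplacian_def by (auto intro!: sum.neutral)

lemma laplacian_zero_imp_const: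
  assumes G: "mgraph_wf G" and harm: "\<forall>v\<in>verts G. laplacian G x v = 0"
  obtains c where "\<forall>v\<in>verts G. x v = c"
proof -
  have G': "finite_mgraph G" using G by (rule mgraph_wf_imp_finite_mgraph)
  define energy where "energy e = (x (snd (ends G e)) - x (fst (ends G e)))
                                   * (x (snd (ends G e)) - x (fst (ends G e))) / len G e" for e
  have "(\<Sum>e\<in>edges G. energy e) = 0"
    using laplacian_green[OF G', of x x] harm unfolding energy_def by simp
  moreover have "\<forall>e\<in>edges G. energy e \<ge> 0"
    using finite_mgraph_edge(3)[OF G'] unfolding energy_def by (auto intro: divide_nonneg_pos)
  ultimately have "\<forall>e\<in>edges G. energy e = 0"
    using sum_nonneg_eq_0_iff[OF finite_mgraph_finite(2)[OF G']] by blast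
  then have edge: "\<forall>e\<in>edges G. x (fst (ends G e)) = x (snd (ends G e))"
    using finite_mgraph_edge(3)[OF G'] unfolding energy_def by (metis divide_eq_0_iff less_irrefl mult_eq_0_iff right_minus_eq)
  obtain v0 where v0: "v0 \<in> verts G" using G unfolding mgraph_wf_def by auto
  have "x v = x v0" if "v \<in> verts G" for v
  proof -
    have "vconn G v0 v" using G v0 that unfolding mgraph_wf_def graph_connected_def by blast
    from edge_const_imp_vconn_eq[OF edge this] show ?thesis by simp
  qed
  then show ?thesis using that by blast
qed

lemma laplacian_as_sum:
  assumes G: "finite_mgraph G" and u: "u \<in> verts G"
  shows "laplacian G x u = (\<Sum>w\<in>verts G. laplacian G (\<lambda>v. if v = w then 1 else 0) u * x w)"
proof -
  have key: "(\<Sum>w\<in>verts G. (((if a = w then 1 else 0) - (if u = w then 1 else 0)) / l) * x w)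
               = (x a - x u) / l"
    if "a \<in> verts G" for a l
  proof -
    have "(\<Sum>w\<in>verts G. (((if a = w then 1 else 0) - (if u = w then 1 else 0)) / l) * x w)
       = (\<Sum>w\<in>verts G. (if w = a then x a / l else 0) - (if w = u then x u / l else 0))"
      by (intro sum.cong refl) auto
    also have "\<dots> = x a / l - x u / l"
      using finite_mgraph_finite(1)[OF G] that u by (simp add: sum_subtractf)
    finally show ?thesis by (simp add: diff_divide_distrib)
  qed
  let ?\<delta> = "\<lambda>a w. if a = w then 1 else 0 :: real"
  have "(\<Sum>w\<in>verts G. laplacian G (\<lambda>v. ?\<delta> v w) u * x w)
     = (\<Sum>e\<in>{e\<in>edges G. fst (ends G e) = u}. \<Sum>w\<in>verts G. ((?\<delta> (snd (ends G e)) w - ?\<delta> u w) / len G e) * x w)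
     + (\<Sum>e\<in>{e\<in>edges G. snd (ends G e) = u}. \<Sum>w\<in>verts G. ((?\<delta> (fst (ends G e)) w - ?\<delta> u w) / len G e) * x w)"
    unfolding laplacian_def sum_distrib_right sum.distrib distrib_right
    by (simp only: sum.swap[of _ "verts G"])
  also have "\<dots> = laplacian G x u"
    unfolding laplacian_def using key finite_mgraph_edge[OF G]
    by (intro arg_cong2[where f = "(+)"] sum.cong refl) auto
  finally show ?thesis by simp
qed

lemma laplacian_solvable:
  assumes G: "mgraph_wf G" and b: "(\<Sum>v\<in>verts G. b v) = 0"
  obtains x where "\<forall>v\<in>verts G. laplacian G x v = b v"
proof -
  have G': "finite_mgraph G" using G by (rule mgraph_wf_imp_finite_mgraph)
  note fin = finite_mgraph_finite(1)[OF G']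
  obtain z where z: "z \<in> verts G" using G unfolding mgraph_wf_def by auto
  have split: "(\<Sum>v\<in>verts G. f v) = f z + (\<Sum>v\<in>verts G - {z}. f v)" for f :: "'a \<Rightarrow> real"
    using fin z by (simp add: sum.remove)
  \<comment> \<open>Replace the equation at z, which is implied by the others, by the normalisation x z = 0.\<close>
  define c where "c u w = (if u = z then (if w = z then 1 else 0)
                           else laplacian G (\<lambda>v. if v = w then 1 else 0) u)" for u w
  have c: "(\<Sum>w\<in>verts G. c u w * x w) = (if u = z then x z else laplacian G x u)"
    if "u \<in> verts G" for u x
  proof (cases "u = z")
    case True
    have "(\<Sum>w\<in>verts G. c u w * x w) = (\<Sum>w\<in>verts G. if w = z then x z else 0)"
      unfolding c_def using True by (intro sum.cong refl) auto
    then show ?thesis using True z fin by simp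
  qed (simp add: c_def laplacian_as_sum[OF G' that, of x])
  have inj: "\<forall>u\<in>verts G. x u = 0" if h: "\<forall>u\<in>verts G. (\<Sum>w\<in>verts G. c u w * x w) = 0" for x
  proof -
    have lap: "laplacian G x u = 0" if "u \<in> verts G" "u \<noteq> z" for u
      using h c[OF that(1), of x] that by simp
    have "(\<Sum>v\<in>verts G - {z}. laplacian G x v) = 0" using lap by (intro sum.neutral) auto
    then have "laplacian G x z = 0" using sum_laplacian[OF G', of x] split[of "laplacian G x"] by simp
    then obtain k where "\<forall>v\<in>verts G. x v = k"
      using lap laplacian_zero_imp_const[OF G, of x] by blast
    moreover have "x z = 0" using h c[OF z, of x] z by simp
    ultimately show ?thesis using z by auto
  qed
  obtain x where x: "\<forall>u\<in>verts G. (\<Sum>w\<in>verts G. c u w * x w) = (if u = z then 0 else b u)"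
    using finite_linear_system_solvable[OF fin inj, where b = "\<lambda>u. if u = z then 0 else b u"] by blast
  have lap: "laplacian G x u = b u" if "u \<in> verts G" "u \<noteq> z" for u
    using x c[OF that(1), of x] that by simp
  have "(\<Sum>v\<in>verts G - {z}. laplacian G x v) = (\<Sum>v\<in>verts G - {z}. b v)"
    using lap by (intro sum.cong) auto
  then have "laplacian G x z = b z"
    using sum_laplacian[OF G', of x] split[of "laplacian G x"] split[of b] b by simp
  with lap show ?thesis using that by blast
qed

lemma sum_filter_remove:
  assumes "finite E" "e \<in> E"
  shows "(\<Sum>e'\<in>{e'\<in>E. P e'}. g e') = (if P e then g e else 0) + (\<Sum>e'\<in>{e'\<in>E - {e}. P e'}. g e')"
proof (cases "P e")
  case True
  then have "{e'\<in>E - {e}. P e'} = {e'\<in>E. P e'} - {e}" by auto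
  then show ?thesis using True assms by (simp add: sum.remove)
next
  case False
  then have "{e'\<in>E - {e}. P e'} = {e'\<in>E. P e'}" by auto
  then show ?thesis using False by simp
qed

lemma laplacian_set_length:
  assumes G: "finite_mgraph G" and e: "e \<in> edges G"
  shows "laplacian (set_length G e l) x v = laplacian (delete_edge G e) x v
     + (if fst (ends G e) = v then (x (snd (ends G e)) - x (fst (ends G e))) / l else 0)
     + (if snd (ends G e) = v then (x (fst (ends G e)) - x (snd (ends G e))) / l else 0)"
proof -
  have E: "finite (edges G)" using finite_mgraph_finite(2)[OF G] .
  have o1: "(\<Sum>e'\<in>{e'\<in>edges G - {e}. fst (ends G e') = v}. (x (snd (ends G e')) - x v) / ((len G)(e := l)) e')
          = (\<Sum>e'\<in>{e'\<in>edges G - {e}. fst (ends G e') = v}. (x (snd (ends G e')) - x v) / len G e')"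
    by (rule sum.cong) auto
  have o2: "(\<Sum>e'\<in>{e'\<in>edges G - {e}. snd (ends G e') = v}. (x (fst (ends G e')) - x v) / ((len G)(e := l)) e')
          = (\<Sum>e'\<in>{e'\<in>edges G - {e}. snd (ends G e') = v}. (x (fst (ends G e')) - x v) / len G e')"
    by (rule sum.cong) auto
  show ?thesis
    unfolding laplacian_def set_length_simps delete_edge_simps
      sum_filter_remove[OF E e, where P = "\<lambda>e'. fst (ends G e') = v"]
      sum_filter_remove[OF E e, where P = "\<lambda>e'. snd (ends G e') = v"] o1 o2
    by auto
qed

section \<open>Point sources\<close>

definition tent_profile :: "real \<Rightarrow> real \<Rightarrow> real \<Rightarrow> real" where
  "tent_profile l c u = (if u \<le> c then u * (l - c) / l else c * (l - u) / l)"

text \<open>The voltage on a single edge, grounded at both end points, of a unit current entering at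
  distance c from the first end point: it carries the kink of a source at an interior point.\<close>

definition tent :: "('v,'e) mgraph \<Rightarrow> 'e \<Rightarrow> real \<Rightarrow> ('v,'e) pt \<Rightarrow> real" where
  "tent G e c p = (case p of Vert v \<Rightarrow> 0 | Inner e' u \<Rightarrow>
     if e' = e \<and> 0 < u \<and> u < len G e then tent_profile (len G e) c u else 0)"

lemma tent_Vert [simp]: "tent G e c (Vert v) = 0"
  unfolding tent_def by simp

lemma tent_edge_pt:
  "0 < c \<Longrightarrow> c < len G e \<Longrightarrow> 0 \<le> u \<Longrightarrow> u \<le> len G e \<Longrightarrow>
     tent G e c (edge_pt G e u) = tent_profile (len G e) c u"
  unfolding tent_def edge_pt_def tent_profile_def by auto

lemma tent_edge_pt_other: "e' \<noteq> e \<Longrightarrow> tent G e c (edge_pt G e' u) = 0"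
  unfolding tent_def edge_pt_def by auto

lemma tent_profile_left: "u \<le> c \<Longrightarrow> tent_profile l c u = 0 + ((l - c) / l) * u"
  unfolding tent_profile_def by simp

lemma tent_profile_right: "l \<noteq> 0 \<Longrightarrow> c \<le> u \<Longrightarrow> tent_profile l c u = c + (- c / l) * u"
  unfolding tent_profile_def by (auto simp: field_simps)

lemma tent_profile_min:
  assumes "0 < c" "c < l"
  shows "tent_profile l c u = min (u * (l - c) / l) (c * (l - u) / l)"
proof -
  have "u \<le> c \<longleftrightarrow> u * (l - c) / l \<le> c * (l - u) / l"
    using assms by (simp add: divide_right_mono_neg field_simps)
  then show ?thesis unfolding tent_profile_def min_def by auto
qed

lemma tent_piecewise_affine:
  assumes c: "0 < c" "c < len G e"
  shows "piecewise_affine G {Inner e c} (tent G e c)"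
  unfolding piecewise_affine_def
proof
  fix e' assume e': "e' \<in> edges G"
  show "piecewise_affine_on_edge G {Inner e c} (tent G e c) e'"
  proof (cases "e' = e")
    case True
    have "continuous_on {0..len G e} (\<lambda>t. min (t * (len G e - c) / len G e) (c * (len G e - t) / len G e))"
      using c by (intro continuous_intros) auto
    moreover have "continuous_on {0..len G e} (\<lambda>t. tent G e c (edge_pt G e t)) \<longleftrightarrow>
        continuous_on {0..len G e} (\<lambda>t. min (t * (len G e - c) / len G e) (c * (len G e - t) / len G e))"
      using c by (intro continuous_on_cong) (auto simp: tent_edge_pt tent_profile_min)
    moreover have "\<exists>\<alpha> \<beta>. \<forall>t\<in>{a..b}. tent G e c (edge_pt G e t) = \<alpha> + \<beta> * t"
      if ab: "0 \<le> a" "a < b" "b \<le> len G e" "\<forall>c'. a < c' \<and> c' < b \<longrightarrow> Inner e c' \<notin> {Inner e c}" for a b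
    proof -
      from ab have "b \<le> c \<or> c \<le> a" by force
      then show ?thesis
      proof
        assume "b \<le> c"
        then show ?thesis using ab c
          by (intro exI[of _ 0] exI[of _ "(len G e - c) / len G e"]) (auto simp: tent_edge_pt tent_profile_left)
      next
        assume "c \<le> a"
        then show ?thesis using ab c
          by (intro exI[of _ c] exI[of _ "- c / len G e"]) (auto simp: tent_edge_pt tent_profile_right)
      qed
    qed
    ultimately show ?thesis unfolding True piecewise_affine_on_edge_def by blast
  next
    case False
    then show ?thesis
      by (intro piecewise_affine_on_edge_affine[where \<alpha> = 0 and \<beta> = 0]) (simp add: tent_edge_pt_other)
  qed
qed

definition barycentric :: "('v,'e) mgraph \<Rightarrow> ('v,'e) pt \<Rightarrow> 'v \<Rightarrow> real" where
  "barycentric G y v = (case y of Vert w \<Rightarrow> (if w = v then 1 else 0)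
     | Inner e c \<Rightarrow> (if fst (ends G e) = v then (len G e - c) / len G e else 0)
                  + (if snd (ends G e) = v then c / len G e else 0))"

lemma sum_barycentric:
  assumes G: "finite_mgraph G" and y: "y \<in> points G"
  shows "(\<Sum>v\<in>verts G. x v * barycentric G y v) = interp G x y"
proof (cases y)
  case (Vert w)
  then have "(\<Sum>v\<in>verts G. x v * barycentric G y v) = (\<Sum>v\<in>verts G. if v = w then x w else 0)"
    unfolding barycentric_def by (intro sum.cong) auto
  then show ?thesis using Vert y finite_mgraph_finite(1)[OF G] by simp
next
  case (Inner e c)
  with y have c: "e \<in> edges G" "0 < c" "c < len G e" by auto
  let ?p = "fst (ends G e)" and ?q = "snd (ends G e)" and ?l = "len G e"
  have "(\<Sum>v\<in>verts G. x v * barycentric G y v)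
     = (\<Sum>v\<in>verts G. if v = ?p then x ?p * ((?l - c) / ?l) else 0)
     + (\<Sum>v\<in>verts G. if v = ?q then x ?q * (c / ?l) else 0)"
    unfolding Inner barycentric_def pt.case sum.distrib[symmetric]
    by (intro sum.cong) (auto simp: algebra_simps)
  also have "\<dots> = x ?p * ((?l - c) / ?l) + x ?q * (c / ?l)"
    using finite_mgraph_edge[OF G c(1)] finite_mgraph_finite(1)[OF G] by simp
  also have "\<dots> = interp G x y" unfolding Inner interp_def using c by (simp add: field_simps)
  finally show ?thesis .
qed

lemma outflow_tent_Vert:
  assumes G: "finite_mgraph G" and e: "e \<in> edges G" and c: "0 < c" "c < len G e"
  shows "outflow G (tent G e c) (Vert v) = barycentric G (Inner e c) v"
proof -
  have right: "dslope (\<lambda>u. tent G e c (edge_pt G e' u)) 0 1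
                 = (if e' = e then (len G e - c) / len G e else 0)" for e'
  proof (cases "e' = e")
    case True
    then show ?thesis using c
      by (simp, intro dslope_right_affine[of c _ _ 0]) (auto simp: tent_edge_pt tent_profile_left)
  qed (simp add: tent_edge_pt_other)
  have left: "dslope (\<lambda>u. tent G e c (edge_pt G e' u)) (len G e') (-1)
                 = (if e' = e then c / len G e else 0)" for e'
  proof (cases "e' = e")
    case True
    have "dslope (\<lambda>u. tent G e c (edge_pt G e u)) (len G e) (-1) = - (- c / len G e)"
      using c by (intro dslope_left_affine[of "len G e - c" _ _ c]) (auto simp: tent_edge_pt tent_profile_right)
    then show ?thesis using True by simp
  qed (simp add: tent_edge_pt_other)
  have "outflow G (tent G e c) (Vert v)
     = (\<Sum>e'\<in>{e'\<in>edges G. fst (ends G e') = v}. if e' = e then (len G e - c) / len G e else 0)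
     + (\<Sum>e'\<in>{e'\<in>edges G. snd (ends G e') = v}. if e' = e then c / len G e else 0)"
    unfolding outflow_def pt.case right left ..
  also have "\<dots> = barycentric G (Inner e c) v"
    using e finite_mgraph_finite(2)[OF G] unfolding barycentric_def by (simp add: sum.delta')
  finally show ?thesis .
qed

lemma outflow_tent_Inner:
  assumes c: "0 < c" "c < len G e" and u: "Inner e' u \<in> points G"
  shows "outflow G (tent G e c) (Inner e' u) = (if Inner e' u = Inner e c then -1 else 0)"
proof -
  from u have u: "0 < u" "u < len G e'" by auto
  consider "e' \<noteq> e" | "e' = e" "u < c" | "e' = e" "u = c" | "e' = e" "c < u" by linarith
  then show ?thesis
  proof cases
    case 1
    then show ?thesis using u
      by (simp, intro outflow_Inner_affine[where \<delta> = "min u (len G e' - u)" and \<alpha> = 0 and \<beta> = 0])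
        (auto simp: tent_edge_pt_other)
  next
    case 2
    have "tent G e c (edge_pt G e t) = 0 + ((len G e - c) / len G e) * t"
      if "u - min u (c - u) \<le> t" "t \<le> u + min u (c - u)" for t
      using that 2 c by (auto simp: tent_edge_pt tent_profile_left min_def split: if_splits)
    then show ?thesis using 2 u
      by (simp, intro outflow_Inner_affine[where \<delta> = "min u (c - u)" and \<alpha> = 0
          and \<beta> = "(len G e - c) / len G e"]) auto
  next
    case 4
    have "tent G e c (edge_pt G e t) = c + (- c / len G e) * t"
      if "u - min (u - c) (len G e - u) \<le> t" "t \<le> u + min (u - c) (len G e - u)" for t
      using that 4 c u by (auto simp: tent_edge_pt tent_profile_right min_def split: if_splits)
    then show ?thesis using 4 u
      by (simp, intro outflow_Inner_affine[where \<delta> = "min (u - c) (len G e - u)" and \<alpha> = c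
          and \<beta> = "- c / len G e"]) auto
  next
    case 3
    have "dslope (\<lambda>t. tent G e c (edge_pt G e t)) c 1 = - c / len G e"
      using c by (intro dslope_right_affine[of "len G e - c" _ _ c]) (auto simp: tent_edge_pt tent_profile_right)
    moreover have "dslope (\<lambda>t. tent G e c (edge_pt G e t)) c (-1) = - ((len G e - c) / len G e)"
      using c by (intro dslope_left_affine[of c _ _ 0]) (auto simp: tent_edge_pt tent_profile_left)
    moreover have "- c / len G e + - ((len G e - c) / len G e) = -1" using c by (simp add: field_simps)
    ultimately show ?thesis using 3 unfolding outflow_def by simp
  qed
qed

definition point_tent :: "('v,'e) mgraph \<Rightarrow> ('v,'e) pt \<Rightarrow> ('v,'e) pt \<Rightarrow> real" where
  "point_tent G y = (case y of Vert w \<Rightarrow> (\<lambda>_. 0) | Inner e c \<Rightarrow> tent G e c)"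

lemma point_tent_Vert [simp]: "point_tent G y (Vert v) = 0"
  unfolding point_tent_def by (simp split: pt.split)

lemma point_tent_piecewise_affine:
  assumes "y \<in> points G"
  shows "piecewise_affine G {y} (point_tent G y)"
  using assms tent_piecewise_affine piecewise_affine_const
  unfolding point_tent_def by (cases y) auto

lemma outflow_point_tent:
  assumes G: "finite_mgraph G" and y: "y \<in> points G" and p: "p \<in> points G"
  shows "outflow G (point_tent G y) p
           = (case p of Vert v \<Rightarrow> barycentric G y v | Inner e u \<Rightarrow> 0) - (if p = y then 1 else 0)"
proof (cases y)
  case (Vert w)
  have "outflow G (\<lambda>_. 0) p = 0" by (simp add: outflow_def split: pt.split)
  then show ?thesis using Vert unfolding point_tent_def barycentric_def by (cases p) auto
next
  case (Inner e c)
  with y have c: "e \<in> edges G" "0 < c" "c < len G e" by auto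
  show ?thesis
    using Inner p outflow_tent_Vert[OF G c] outflow_tent_Inner[OF c(2,3)]
    unfolding point_tent_def by (cases p) auto
qed

section \<open>Voltage functions\<close>

definition dipole :: "('v,'e) pt \<Rightarrow> ('v,'e) pt \<Rightarrow> ('v,'e) pt \<Rightarrow> real" where
  "dipole y z p = (if p = y then -1 else 0) + (if p = z then 1 else 0)"

lemma is_voltage_iff:
  "is_voltage G y z f \<longleftrightarrow> f z = 0 \<and> (\<forall>p. p \<notin> points G \<longrightarrow> f p = 0) \<and>
     piecewise_affine G {y, z} f \<and> (\<forall>p\<in>points G. outflow G f p = dipole y z p)"
  unfolding is_voltage_def piecewise_affine_def piecewise_affine_on_edge_def dipole_def by simp

lemma outflow_zero_edge_affine:
  assumes G: "finite_mgraph G" and f: "piecewise_affine G S f" and S: "finite S"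
    and harm: "\<forall>p\<in>points G. outflow G f p = 0" and e: "e \<in> edges G"
    and t: "0 \<le> t" "t \<le> len G e"
  shows "f (edge_pt G e t) = f (Vert (fst (ends G e)))
           + (f (Vert (snd (ends G e))) - f (Vert (fst (ends G e)))) * t / len G e"
proof -
  have l: "len G e > 0" using finite_mgraph_edge[OF G e] by simp
  have "\<exists>\<alpha> \<beta>. \<forall>x\<in>{0..len G e}. f (edge_pt G e x) = \<alpha> + \<beta> * x"
  proof (rule affine_if_no_kinks[of "Inner e -` S"])
    show "finite (Inner e -` S)" using S by (rule finite_vimageI) (simp add: inj_on_def)
    fix u v assume uv: "0 \<le> u" "u < v" "v \<le> len G e" "\<forall>c\<in>Inner e -` S. \<not> (u < c \<and> c < v)"
    then have "\<forall>c. u < c \<and> c < v \<longrightarrow> Inner e c \<notin> S" by auto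
    with uv show "\<exists>\<alpha> \<beta>. \<forall>x\<in>{u..v}. f (edge_pt G e x) = \<alpha> + \<beta> * x"
      using f e unfolding piecewise_affine_def piecewise_affine_on_edge_def by blast
  next
    fix c assume "0 < c" "c < len G e"
    then show "dslope (\<lambda>x. f (edge_pt G e x)) c 1 + dslope (\<lambda>x. f (edge_pt G e x)) c (-1) = 0"
      using harm[rule_format, of "Inner e c"] e unfolding outflow_def by simp
  qed (rule l)
  then obtain \<alpha> \<beta> where "\<forall>x\<in>{0..len G e}. f (edge_pt G e x) = \<alpha> + \<beta> * x" by blast
  then show ?thesis by (rule edge_affine_interpolates_ends[OF _ l t])
qed

lemma outflow_zero_imp_const:
  assumes G: "mgraph_wf G" and f: "piecewise_affine G S f" and S: "finite S"
    and harm: "\<forall>p\<in>points G. outflow G f p = 0"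
  obtains k where "\<forall>p\<in>points G. f p = k"
proof -
  have G': "finite_mgraph G" using G by (rule mgraph_wf_imp_finite_mgraph)
  note aff = outflow_zero_edge_affine[OF G' f S harm]
  have "laplacian G (\<lambda>w. f (Vert w)) v = 0" if "v \<in> verts G" for v
    using outflow_Vert_edgewise_affine[OF G' aff, of v] harm that by simp
  then obtain k where k: "\<forall>v\<in>verts G. f (Vert v) = k"
    using laplacian_zero_imp_const[OF G] by blast
  have "f p = k" if p: "p \<in> points G" for p
  proof (cases p)
    case (Inner e t)
    with p have "e \<in> edges G" "0 < t" "t < len G e" by auto
    then show ?thesis
      using aff[of e t] k finite_mgraph_edge[OF G'] Inner by (simp add: edge_pt_Inner)
  qed (use k p in simp)
  then show ?thesis using that by blast
qed

lemma voltage_unique: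
  assumes G: "mgraph_wf G" and z: "z \<in> points G"
    and f: "is_voltage G y z f" and g: "is_voltage G y z g"
  shows "f = g"
proof
  fix p
  have G': "finite_mgraph G" using G by (rule mgraph_wf_imp_finite_mgraph)
  have pf: "piecewise_affine G {y, z} f" and pg: "piecewise_affine G {y, z} g"
    using f g unfolding is_voltage_iff by auto
  have "\<forall>p\<in>points G. outflow G (\<lambda>x. f x - g x) p = 0"
    using outflow_diff[OF G' pf pg] f g unfolding is_voltage_iff by simp
  then obtain k where k: "\<forall>p\<in>points G. f p - g p = k"
    using outflow_zero_imp_const[OF G piecewise_affine_diff[OF pf pg]] by blast
  moreover have "f z - g z = 0" using f g unfolding is_voltage_iff by simp
  ultimately have "\<forall>p\<in>points G. f p = g p" using z by force
  then show "f p = g p" using f g unfolding is_voltage_iff by (cases "p \<in> points G") auto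
qed

lemma jfun_eqI:
  assumes "mgraph_wf G" "z \<in> points G" "is_voltage G y z f"
  shows "jfun G z p y = f p"
proof -
  have "(THE f. is_voltage G y z f) = f"
    using assms voltage_unique[OF assms(1,2)] by (intro the_equality) auto
  then show ?thesis unfolding jfun_def by simp
qed

lemma resist_eqI:
  assumes "mgraph_wf G" "t \<in> points G" "is_voltage G s t f"
  shows "resist G s t = f s"
  unfolding resist_def using jfun_eqI[OF assms] .

definition kinked_interp ::
    "('v,'e) mgraph \<Rightarrow> ('v \<Rightarrow> real) \<Rightarrow> ('v,'e) pt \<Rightarrow> ('v,'e) pt \<Rightarrow> ('v,'e) pt \<Rightarrow> real" where
  "kinked_interp G x y z p =
     (if p \<in> points G then interp G x p + point_tent G y p - point_tent G z p else 0)"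

lemma kinked_interp_Vert: "v \<in> verts G \<Longrightarrow> kinked_interp G x y z (Vert v) = x v"
  unfolding kinked_interp_def by simp

lemma kinked_interp_Vert_Vert: "p \<in> points G \<Longrightarrow> kinked_interp G x (Vert a) (Vert b) p = interp G x p"
  unfolding kinked_interp_def point_tent_def by simp

lemma is_voltage_kinked_interp:
  assumes G: "finite_mgraph G" and y: "y \<in> points G" and z: "z \<in> points G"
    and lap: "\<forall>v\<in>verts G. laplacian G x v = barycentric G z v - barycentric G y v"
    and z0: "kinked_interp G x y z z = 0"
  shows "is_voltage G y z (kinked_interp G x y z)"
proof -
  define \<Phi> where "\<Phi> p = interp G x p + point_tent G y p - point_tent G z p" for p
  have eq: "kinked_interp G x y z p = \<Phi> p" if "p \<in> points G" for p
    using that unfolding kinked_interp_def \<Phi>_def by simp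
  have ty: "piecewise_affine G {y, z} (point_tent G y)" and tz: "piecewise_affine G {y, z} (point_tent G z)"
    using point_tent_piecewise_affine[OF y] point_tent_piecewise_affine[OF z]
    by (auto elim!: piecewise_affine_mono)
  have ix: "piecewise_affine G {y, z} (interp G x)" using G by (rule interp_piecewise_affine)
  have pa: "piecewise_affine G {y, z} \<Phi>"
    unfolding \<Phi>_def by (intro piecewise_affine_diff piecewise_affine_add ix ty tz)
  have out: "outflow G \<Phi> p = dipole y z p" if p: "p \<in> points G" for p
  proof -
    have "outflow G \<Phi> p = outflow G (interp G x) p + outflow G (point_tent G y) p
                            - outflow G (point_tent G z) p"
      unfolding \<Phi>_def using p G ix ty tz
      by (simp add: outflow_diff[OF G piecewise_affine_add] outflow_add)
    also have "\<dots> = dipole y z p"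
      unfolding outflow_interp[OF G p] outflow_point_tent[OF G y p] outflow_point_tent[OF G z p]
      using lap p by (cases p) (auto simp: dipole_def)
    finally show ?thesis .
  qed
  have "piecewise_affine G {y, z} (kinked_interp G x y z)"
    by (rule piecewise_affine_cong[OF G _ pa]) (simp add: eq)
  moreover have "outflow G (kinked_interp G x y z) p = dipole y z p" if "p \<in> points G" for p
    using outflow_cong[OF G eq that] out[OF that] by simp
  moreover have "kinked_interp G x y z p = 0" if "p \<notin> points G" for p
    using that unfolding kinked_interp_def by simp
  ultimately show ?thesis unfolding is_voltage_iff using z0 by blast
qed

lemma voltage_exists:
  assumes G: "mgraph_wf G" and y: "y \<in> points G" and z: "z \<in> points G"
  obtains x where "\<forall>v\<in>verts G. laplacian G x v = barycentric G z v - barycentric G y v"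
    "is_voltage G y z (kinked_interp G x y z)"
proof -
  have G': "finite_mgraph G" using G by (rule mgraph_wf_imp_finite_mgraph)
  have "(\<Sum>v\<in>verts G. barycentric G z v - barycentric G y v) = 0"
    using sum_barycentric[OF G' z, of "\<lambda>_. 1"] sum_barycentric[OF G' y, of "\<lambda>_. 1"]
    by (simp add: sum_subtractf interp_def split: pt.split)
  then obtain x0 where x0: "\<forall>v\<in>verts G. laplacian G x0 v = barycentric G z v - barycentric G y v"
    using laplacian_solvable[OF G] by blast
  define x where "x v = x0 v + - kinked_interp G x0 y z z" for v
  have "\<forall>v\<in>verts G. laplacian G x v = barycentric G z v - barycentric G y v"
    using x0 unfolding x_def laplacian_add_const by simp
  moreover have "kinked_interp G x y z z = 0"
    using z unfolding x_def kinked_interp_def interp_add_const by simp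
  ultimately show ?thesis using that is_voltage_kinked_interp[OF G' y z] by blast
qed

lemma jfun_kinked_interp:
  assumes G: "mgraph_wf G" and y: "y \<in> points G" and z: "z \<in> points G"
  obtains x where "\<forall>v\<in>verts G. laplacian G x v = barycentric G z v - barycentric G y v"
    "\<And>p. jfun G z p y = kinked_interp G x y z p"
proof -
  obtain x where x: "\<forall>v\<in>verts G. laplacian G x v = barycentric G z v - barycentric G y v"
    and v: "is_voltage G y z (kinked_interp G x y z)"
    using voltage_exists[OF assms] .
  show ?thesis by (rule that[OF x jfun_eqI[OF G z v]])
qed

lemma is_voltage_jfun:
  assumes "mgraph_wf G" "y \<in> points G" "z \<in> points G"
  shows "is_voltage G y z (\<lambda>p. jfun G z p y)"
proof -
  obtain x where v: "is_voltage G y z (kinked_interp G x y z)"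
    using voltage_exists[OF assms] .
  moreover have "(\<lambda>p. jfun G z p y) = kinked_interp G x y z"
    using jfun_eqI[OF assms(1,3) v] by (rule ext)
  ultimately show ?thesis by simp
qed

lemma jfun_at_ground:
  assumes "mgraph_wf G" "y \<in> points G" "z \<in> points G"
  shows "jfun G z z y = 0"
  using is_voltage_jfun[OF assms] unfolding is_voltage_iff by simp

section \<open>Reciprocity\<close>

lemma sum_mult_laplacian_barycentric:
  assumes G: "finite_mgraph G" and y: "y \<in> points G" and z: "z \<in> points G"
    and lap: "\<forall>v\<in>verts G. laplacian G x v = barycentric G z v - barycentric G y v"
  shows "(\<Sum>v\<in>verts G. h v * laplacian G x v) = interp G h z - interp G h y"
proof -
  have "(\<Sum>v\<in>verts G. h v * laplacian G x v)
          = (\<Sum>v\<in>verts G. h v * barycentric G z v - h v * barycentric G y v)"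
    using lap by (intro sum.cong refl) (simp add: right_diff_distrib)
  also have "\<dots> = interp G h z - interp G h y"
    by (simp add: sum_subtractf sum_barycentric[OF G z] sum_barycentric[OF G y])
  finally show ?thesis .
qed

theorem jfun_reciprocity:
  assumes G: "mgraph_wf G" and a: "a \<in> verts G" and b: "b \<in> verts G"
    and y: "y \<in> points G" and z: "z \<in> points G"
  shows "jfun G z (Vert a) y - jfun G z (Vert b) y = jfun G (Vert a) z (Vert b) - jfun G (Vert a) y (Vert b)"
proof -
  have G': "finite_mgraph G" using G by (rule mgraph_wf_imp_finite_mgraph)
  have A: "Vert a \<in> points G" and B: "Vert b \<in> points G" using a b by auto
  obtain x where x: "\<forall>v\<in>verts G. laplacian G x v = barycentric G z v - barycentric G y v"
    and jx: "\<And>p. jfun G z p y = kinked_interp G x y z p"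
    using jfun_kinked_interp[OF G y z] by blast
  obtain h where h: "\<forall>v\<in>verts G. laplacian G h v = barycentric G (Vert a) v - barycentric G (Vert b) v"
    and jh: "\<And>p. jfun G (Vert a) p (Vert b) = kinked_interp G h (Vert b) (Vert a) p"
    using jfun_kinked_interp[OF G B A] by blast
  have "x a - x b = (\<Sum>v\<in>verts G. x v * laplacian G h v)"
    using sum_mult_laplacian_barycentric[OF G' B A h] by simp
  also have "\<dots> = (\<Sum>v\<in>verts G. h v * laplacian G x v)" by (rule laplacian_symmetric[OF G'])
  also have "\<dots> = interp G h z - interp G h y" using sum_mult_laplacian_barycentric[OF G' y z x] .
  finally show ?thesis unfolding jx jh using a b y z by (simp add: kinked_interp_Vert kinked_interp_Vert_Vert)
qed

corollary jfun_swap_Vert: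
  assumes "mgraph_wf G" "a \<in> verts G" "b \<in> verts G" "s \<in> points G"
  shows "jfun G (Vert a) (Vert b) s = jfun G (Vert a) s (Vert b)"
  using jfun_reciprocity[OF assms, of "Vert a"] assms
    jfun_at_ground[OF assms(1,4), of "Vert a"] jfun_at_ground[OF assms(1), of "Vert b" "Vert a"]
  by simp

lemma resist_Vert_nonneg:
  assumes G: "mgraph_wf G" and a: "a \<in> verts G" and b: "b \<in> verts G"
  shows "resist G (Vert a) (Vert b) \<ge> 0"
proof -
  have G': "finite_mgraph G" using G by (rule mgraph_wf_imp_finite_mgraph)
  have A: "Vert a \<in> points G" and B: "Vert b \<in> points G" using a b by auto
  obtain x where x: "\<forall>v\<in>verts G. laplacian G x v = barycentric G (Vert b) v - barycentric G (Vert a) v"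
    and jx: "\<And>p. jfun G (Vert b) p (Vert a) = kinked_interp G x (Vert a) (Vert b) p"
    using jfun_kinked_interp[OF G A B] by blast
  have r: "resist G (Vert a) (Vert b) = x a" unfolding resist_def jx using a by (simp add: kinked_interp_Vert)
  have "x b = 0" using jfun_at_ground[OF G A B] jx[of "Vert b"] b by (simp add: kinked_interp_Vert)
  then have "- x a = (\<Sum>v\<in>verts G. x v * laplacian G x v)"
    using sum_mult_laplacian_barycentric[OF G' A B x] by simp
  also have "\<dots> = - (\<Sum>e\<in>edges G. (x (snd (ends G e)) - x (fst (ends G e)))
                        * (x (snd (ends G e)) - x (fst (ends G e))) / len G e)"
    by (rule laplacian_green[OF G'])
  also have "\<dots> \<le> 0"
    using finite_mgraph_edge(3)[OF G'] by (simp add: sum_nonneg divide_nonneg_pos)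
  finally show ?thesis unfolding r by simp
qed

section \<open>Changing the length of one edge\<close>

lemma outflow_set_length_Vert:
  assumes G: "finite_mgraph G" and e: "e \<in> edges G" and l: "l > 0"
    and aff: "\<And>u. 0 \<le> u \<Longrightarrow> u \<le> l \<Longrightarrow> F (edge_pt (set_length G e l) e u)
        = F (Vert (fst (ends G e))) + (F (Vert (snd (ends G e))) - F (Vert (fst (ends G e)))) * u / l"
  shows "outflow (set_length G e l) F (Vert v) = outflow (delete_edge G e) F (Vert v)
     + (if fst (ends G e) = v then (F (Vert (snd (ends G e))) - F (Vert (fst (ends G e)))) / l else 0)
     + (if snd (ends G e) = v then (F (Vert (fst (ends G e))) - F (Vert (snd (ends G e)))) / l else 0)"
proof -
  let ?P = "F (Vert (fst (ends G e)))" and ?Q = "F (Vert (snd (ends G e)))"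
  let ?Gl = "set_length G e l"
  have E: "finite (edges G)" using finite_mgraph_finite(2)[OF G] .
  have "dslope (\<lambda>u. F (edge_pt ?Gl e u)) 0 1 = (?Q - ?P) / l"
    using aff l by (intro dslope_right_affine[of l _ _ ?P]) (auto simp: field_simps)
  moreover have "dslope (\<lambda>u. F (edge_pt ?Gl e u)) l (-1) = - ((?Q - ?P) / l)"
    using aff l by (intro dslope_left_affine[of l _ _ ?P]) (auto simp: field_simps)
  moreover have "(\<Sum>e'\<in>{e'\<in>edges G - {e}. fst (ends G e') = v}. dslope (\<lambda>u. F (edge_pt ?Gl e' u)) 0 1)
      = (\<Sum>e'\<in>{e'\<in>edges G - {e}. fst (ends G e') = v}. dslope (\<lambda>u. F (edge_pt G e' u)) 0 1)"
    by (rule sum.cong) (auto simp: edge_pt_set_length_other)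
  moreover have "(\<Sum>e'\<in>{e'\<in>edges G - {e}. snd (ends G e') = v}.
                    dslope (\<lambda>u. F (edge_pt ?Gl e' u)) (((len G)(e := l)) e') (-1))
      = (\<Sum>e'\<in>{e'\<in>edges G - {e}. snd (ends G e') = v}. dslope (\<lambda>u. F (edge_pt G e' u)) (len G e') (-1))"
    by (rule sum.cong) (auto simp: edge_pt_set_length_other)
  ultimately show ?thesis
    unfolding outflow_def pt.case set_length_simps delete_edge_simps edge_pt_delete_edge
      sum_filter_remove[OF E e, where P = "\<lambda>e'. fst (ends G e') = v"]
      sum_filter_remove[OF E e, where P = "\<lambda>e'. snd (ends G e') = v"]
    by (simp add: minus_divide_left)
qed

lemma outflow_set_length_Inner:
  "e' \<noteq> e \<Longrightarrow> outflow (set_length G e l) F (Inner e' u) = outflow (delete_edge G e) F (Inner e' u)"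
  unfolding outflow_def by (simp add: edge_pt_set_length_other)

definition extend_over_edge ::
    "('v,'e) mgraph \<Rightarrow> 'e \<Rightarrow> real \<Rightarrow> (('v,'e) pt \<Rightarrow> real) \<Rightarrow> ('v,'e) pt \<Rightarrow> real" where
  "extend_over_edge G e l \<psi> p = (if p \<in> points (delete_edge G e) then \<psi> p else
     (case p of Vert v \<Rightarrow> 0 | Inner e' u \<Rightarrow>
        if e' = e \<and> 0 < u \<and> u < l then
          \<psi> (Vert (fst (ends G e))) + (\<psi> (Vert (snd (ends G e))) - \<psi> (Vert (fst (ends G e)))) * u / l
        else 0))"

lemma extend_over_edge_eq:
  "p \<in> points (delete_edge G e) \<Longrightarrow> extend_over_edge G e l \<psi> p = \<psi> p"
  unfolding extend_over_edge_def by simp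

lemma extend_over_edge_edge_pt:
  assumes "finite_mgraph G" "e \<in> edges G" "l > 0" "0 \<le> u" "u \<le> l"
  shows "extend_over_edge G e l \<psi> (edge_pt (set_length G e l) e u)
     = \<psi> (Vert (fst (ends G e))) + (\<psi> (Vert (snd (ends G e))) - \<psi> (Vert (fst (ends G e)))) * u / l"
  using assms finite_mgraph_edge[OF assms(1,2)]
  unfolding edge_pt_def extend_over_edge_def by (auto simp: points_delete_edge)

lemma piecewise_affine_extend_over_edge:
  assumes G: "finite_mgraph G" and e: "e \<in> edges G" and l: "l > 0"
    and \<psi>: "piecewise_affine (delete_edge G e) S \<psi>"
  shows "piecewise_affine (set_length G e l) S (extend_over_edge G e l \<psi>)"
  unfolding piecewise_affine_def
proof
  fix e' assume e': "e' \<in> edges (set_length G e l)"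
  let ?P = "\<psi> (Vert (fst (ends G e)))" and ?Q = "\<psi> (Vert (snd (ends G e)))"
  show "piecewise_affine_on_edge (set_length G e l) S (extend_over_edge G e l \<psi>) e'"
  proof (cases "e' = e")
    case True
    have "extend_over_edge G e l \<psi> (edge_pt (set_length G e l) e u) = ?P + ((?Q - ?P) / l) * u"
      if "0 \<le> u" "u \<le> len (set_length G e l) e" for u
      using extend_over_edge_edge_pt[OF G e l, of u \<psi>] that by simp
    then show ?thesis unfolding True by (rule piecewise_affine_on_edge_affine)
  next
    case False
    then have e'H: "e' \<in> edges (delete_edge G e)" using e' by simp
    have eq: "extend_over_edge G e l \<psi> (edge_pt (set_length G e l) e' u) = \<psi> (edge_pt (delete_edge G e) e' u)"
      if "0 \<le> u" "u \<le> len (delete_edge G e) e'" for u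
    proof -
      have "edge_pt (set_length G e l) e' u = edge_pt (delete_edge G e) e' u"
        using False by (simp add: edge_pt_set_length_other)
      then show ?thesis
        using extend_over_edge_eq[OF edge_pt_in_points[OF finite_mgraph_delete_edge[OF G] e'H that]]
        by simp
    qed
    have len: "len (set_length G e l) e' = len (delete_edge G e) e'" using False by simp
    have on: "piecewise_affine_on_edge (delete_edge G e) S \<psi> e'"
      using \<psi> e'H unfolding piecewise_affine_def by blast
    show ?thesis by (rule piecewise_affine_on_edge_cong[OF len _ on]) (fact eq)
  qed
qed

lemma outflow_extend_over_edge_Vert:
  fixes G :: "('v,'e) mgraph" and e :: 'e
  defines "p \<equiv> fst (ends G e)" and "q \<equiv> snd (ends G e)"
  assumes G: "finite_mgraph G" and e: "e \<in> edges G" and l: "l > 0" and v: "v \<in> verts G"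
  shows "outflow (set_length G e l) (extend_over_edge G e l \<psi>) (Vert v) = outflow (delete_edge G e) \<psi> (Vert v)
           + (if p = v then (\<psi> (Vert q) - \<psi> (Vert p)) / l else 0)
           + (if q = v then (\<psi> (Vert p) - \<psi> (Vert q)) / l else 0)"
proof -
  let ?F = "extend_over_edge G e l \<psi>" and ?H = "delete_edge G e"
  have H: "finite_mgraph ?H" using G by (rule finite_mgraph_delete_edge)
  have eq: "?F x = \<psi> x" if "x \<in> points ?H" for x using that by (rule extend_over_edge_eq)
  have Fp: "?F (Vert p) = \<psi> (Vert p)" and Fq: "?F (Vert q) = \<psi> (Vert q)"
    using finite_mgraph_edge[OF G e] by (auto simp: p_def q_def intro: eq)
  have aff: "?F (edge_pt (set_length G e l) e u) = ?F (Vert p) + (?F (Vert q) - ?F (Vert p)) * u / l"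
    if "0 \<le> u" "u \<le> l" for u
    using extend_over_edge_edge_pt[OF G e l that] Fp Fq unfolding p_def q_def by simp
  have out: "outflow ?H ?F (Vert v) = outflow ?H \<psi> (Vert v)"
    using v by (intro outflow_cong[OF H _]) (auto intro: eq)
  from outflow_set_length_Vert[OF G e l aff[unfolded p_def q_def], of v]
  show ?thesis unfolding out Fp[unfolded p_def] Fq[unfolded q_def] p_def q_def .
qed

lemma outflow_extend_over_edge_Inner:
  assumes G: "finite_mgraph G" and x: "Inner e' u \<in> points (set_length G e l)"
  shows "outflow (set_length G e l) (extend_over_edge G e l \<psi>) (Inner e' u)
           = (if e' = e then 0 else outflow (delete_edge G e) \<psi> (Inner e' u))"
proof (cases "e' = e")
  case True
  with x have u: "0 < u" "u < l" by auto
  have "outflow (set_length G e l) (extend_over_edge G e l \<psi>) (Inner e u) = 0"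
    using u x True extend_over_edge_edge_pt[OF G, of e l _ \<psi>]
    by (intro outflow_Inner_affine[where \<delta> = "min u (l - u)" and \<alpha> = "\<psi> (Vert (fst (ends G e)))"
          and \<beta> = "(\<psi> (Vert (snd (ends G e))) - \<psi> (Vert (fst (ends G e)))) / l"]) (auto simp: field_simps)
  then show ?thesis using True by simp
next
  case False
  with x have xH: "Inner e' u \<in> points (delete_edge G e)" by auto
  have "outflow (set_length G e l) (extend_over_edge G e l \<psi>) (Inner e' u)
          = outflow (delete_edge G e) (extend_over_edge G e l \<psi>) (Inner e' u)"
    using False by (rule outflow_set_length_Inner)
  also have "\<dots> = outflow (delete_edge G e) \<psi> (Inner e' u)"
    using xH by (intro outflow_cong[OF finite_mgraph_delete_edge[OF G]]) (auto intro: extend_over_edge_eq)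
  finally show ?thesis using False by simp
qed

lemma is_voltage_extend_over_edge:
  fixes G :: "('v,'e) mgraph" and e :: 'e
  defines "H \<equiv> delete_edge G e" and "p \<equiv> fst (ends G e)" and "q \<equiv> snd (ends G e)"
  assumes G: "finite_mgraph G" and e: "e \<in> edges G" and l: "l > 0"
    and s: "s \<in> points H" and t: "t \<in> points H"
    and \<psi>: "piecewise_affine H {s, t} \<psi>" "\<psi> t = 0"
    and inner: "\<And>e' u. Inner e' u \<in> points H \<Longrightarrow> outflow H \<psi> (Inner e' u) = dipole s t (Inner e' u)"
    and vert: "\<And>v. v \<in> verts G \<Longrightarrow> outflow H \<psi> (Vert v) = dipole s t (Vert v)
                  + (\<psi> (Vert p) - \<psi> (Vert q)) / l * ((if v = p then 1 else 0) - (if v = q then 1 else 0))"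
  shows "is_voltage (set_length G e l) s t (extend_over_edge G e l \<psi>)"
  unfolding is_voltage_iff
proof (intro conjI allI impI ballI)
  let ?Gl = "set_length G e l" and ?F = "extend_over_edge G e l \<psi>"
  show "?F t = 0" using extend_over_edge_eq[of t] t \<psi>(2) unfolding H_def by simp
  show "?F x = 0" if "x \<notin> points ?Gl" for x
    using that points_set_length[OF e, of x l] unfolding extend_over_edge_def by (auto split: pt.split)
  show "piecewise_affine ?Gl {s, t} ?F"
    using piecewise_affine_extend_over_edge[OF G e l] \<psi>(1) unfolding H_def .
  fix x assume x: "x \<in> points ?Gl"
  show "outflow ?Gl ?F x = dipole s t x"
  proof (cases x)
    case (Vert v)
    with x have v: "v \<in> verts G" by simp
    show ?thesis
      using outflow_extend_over_edge_Vert[OF G e l v, of \<psi>] vert[OF v] Vert l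
      unfolding H_def p_def q_def by (cases "v = p"; cases "v = q") (simp_all add: p_def q_def field_simps)
  next
    case (Inner e' u)
    show ?thesis
    proof (cases "e' = e")
      case True
      then have "x \<noteq> s" "x \<noteq> t" using s t Inner unfolding H_def by (auto simp: points_delete_edge)
      then show ?thesis
        using outflow_extend_over_edge_Inner[OF G x[unfolded Inner], of \<psi>] Inner True
        by (simp add: dipole_def)
    next
      case False
      then have "x \<in> points H" using x Inner unfolding H_def by auto
      then show ?thesis
        using outflow_extend_over_edge_Inner[OF G x[unfolded Inner], of \<psi>] inner[of e' u] Inner False
        unfolding H_def by simp
    qed
  qed
qed

lemma voltage_restrict_delete_edge:
  fixes G :: "('v,'e) mgraph" and e :: 'e
  defines "H \<equiv> delete_edge G e" and "p \<equiv> fst (ends G e)" and "q \<equiv> snd (ends G e)"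
  assumes G: "finite_mgraph G" and e: "e \<in> edges G" and l: "l > 0"
    and s: "s \<in> points H" and t: "t \<in> points H"
    and f: "is_voltage (set_length G e l) s t f"
  shows "piecewise_affine H {s, t} f"
    and "\<And>e' u. Inner e' u \<in> points H \<Longrightarrow> outflow H f (Inner e' u) = dipole s t (Inner e' u)"
    and "\<And>v. v \<in> verts G \<Longrightarrow> outflow H f (Vert v) = dipole s t (Vert v)
                  + (f (Vert p) - f (Vert q)) / l * ((if v = p then 1 else 0) - (if v = q then 1 else 0))"
proof -
  let ?Gl = "set_length G e l"
  have pa: "piecewise_affine ?Gl {s, t} f" and out: "\<And>x. x \<in> points ?Gl \<Longrightarrow> outflow ?Gl f x = dipole s t x"
    using f unfolding is_voltage_iff by auto
  have in_Gl: "x \<in> points ?Gl" if "x \<in> points H" for x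
    using that points_set_length[OF e] unfolding H_def by auto
  show "piecewise_affine H {s, t} f"
    unfolding piecewise_affine_def
  proof
    fix e' assume "e' \<in> edges H"
    then have "e' \<noteq> e" "e' \<in> edges ?Gl" unfolding H_def by auto
    moreover have "f (edge_pt H e' u) = f (edge_pt ?Gl e' u)" for u
      using \<open>e' \<noteq> e\<close> unfolding H_def by (simp add: edge_pt_set_length_other)
    moreover have "len H e' = len ?Gl e'" using \<open>e' \<noteq> e\<close> unfolding H_def by simp
    ultimately show "piecewise_affine_on_edge H {s, t} f e'"
      using pa unfolding piecewise_affine_def by (metis piecewise_affine_on_edge_cong)
  qed
  show "outflow H f (Inner e' u) = dipole s t (Inner e' u)" if "Inner e' u \<in> points H" for e' u
    using that out[OF in_Gl[OF that]] outflow_set_length_Inner[of e' e G l f u]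
    unfolding H_def by (auto simp: points_delete_edge)
  fix v assume v: "v \<in> verts G"
  have "\<forall>c. Inner e c \<notin> {s, t}" using s t unfolding H_def by (auto simp: points_delete_edge)
  then have "f (edge_pt ?Gl e u) = f (Vert p) + (f (Vert q) - f (Vert p)) * u / l" if "0 \<le> u" "u \<le> l" for u
    using piecewise_affine_edge_affine[OF pa, of e u] e l that unfolding p_def q_def by simp
  then have "outflow ?Gl f (Vert v) = outflow H f (Vert v)
      + (if p = v then (f (Vert q) - f (Vert p)) / l else 0)
      + (if q = v then (f (Vert p) - f (Vert q)) / l else 0)"
    using outflow_set_length_Vert[OF G e l, of f v] unfolding H_def p_def q_def by simp
  then show "outflow H f (Vert v) = dipole s t (Vert v)
      + (f (Vert p) - f (Vert q)) / l * ((if v = p then 1 else 0) - (if v = q then 1 else 0))"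
    using out[of "Vert v"] v l by (auto simp: field_simps)
qed

lemma is_voltage_set_length_delete_edge:
  fixes G :: "('v,'e) mgraph" and e :: 'e
  defines "H \<equiv> delete_edge G e" and "P \<equiv> Vert (fst (ends G e))" and "Q \<equiv> Vert (snd (ends G e))"
  assumes G: "finite_mgraph G" and e: "e \<in> edges G" and l: "l > 0"
    and s: "s \<in> points H" and t: "t \<in> points H"
    and \<phi>: "is_voltage H s t \<phi>" and g: "is_voltage H Q P g" and lg: "l + g Q \<noteq> 0"
  defines "I \<equiv> (\<phi> P - \<phi> Q) / (l + g Q)"
  shows "is_voltage (set_length G e l) s t (extend_over_edge G e l (\<lambda>x. \<phi> x + I * (g x - g t)))"
proof -
  have H: "finite_mgraph H" unfolding H_def using G by (rule finite_mgraph_delete_edge)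
  define \<psi> where "\<psi> = (\<lambda>x. \<phi> x + I * (g x - g t))"
  have \<psi>_lin: "\<psi> = (\<lambda>x. 1 * \<phi> x + I * g x + - I * g t)" unfolding \<psi>_def by (simp add: algebra_simps)
  have pa_\<phi>: "piecewise_affine H {s, t} \<phi>" using \<phi> unfolding is_voltage_iff by simp
  have pa_g: "piecewise_affine H {s, t} g"
    using g unfolding is_voltage_iff P_def Q_def by (auto elim: piecewise_affine_mono)
  have out: "outflow H \<psi> x = dipole s t x + I * dipole Q P x" if "x \<in> points H" for x
    using outflow_lincomb[OF H pa_\<phi> pa_g _ that, where a = 1 and b = I and k = "- I * g t"] \<phi> g that
    unfolding \<psi>_lin is_voltage_iff by simp
  have "g P = 0" using g unfolding is_voltage_iff by simp
  moreover have "I * (l + g Q) = \<phi> P - \<phi> Q" unfolding I_def using lg by simp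
  ultimately have "(\<psi> P - \<psi> Q) / l = I" using l unfolding \<psi>_def by (simp add: field_simps)
  then have "is_voltage (set_length G e l) s t (extend_over_edge G e l \<psi>)"
  proof (intro is_voltage_extend_over_edge[OF G e l s[unfolded H_def] t[unfolded H_def]])
    show "piecewise_affine (delete_edge G e) {s, t} \<psi>"
      unfolding \<psi>_lin H_def[symmetric] by (rule piecewise_affine_lincomb[OF pa_\<phi> pa_g])
    show "\<psi> t = 0" using \<phi> unfolding \<psi>_def is_voltage_iff by simp
    show "outflow (delete_edge G e) \<psi> (Inner e' u) = dipole s t (Inner e' u)"
      if "Inner e' u \<in> points (delete_edge G e)" for e' u
      using out[of "Inner e' u"] that unfolding H_def P_def Q_def by (simp add: dipole_def)
  qed (use out in \<open>simp add: H_def P_def Q_def dipole_def\<close>)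
  then show ?thesis unfolding \<psi>_def .
qed

lemma resist_set_length_nonbridge:
  fixes G :: "('v,'e) mgraph" and e :: 'e
  defines "H \<equiv> delete_edge G e" and "P \<equiv> Vert (fst (ends G e))" and "Q \<equiv> Vert (snd (ends G e))"
  assumes G: "mgraph_wf G" and e: "e \<in> edges G" and nb: "\<not> is_bridge G e" and l: "l > 0"
    and s: "s \<in> points H" and t: "t \<in> points H"
  shows "resist (set_length G e l) s t
           = resist H s t - (jfun H P Q s - jfun H P Q t)\<^sup>2 / (l + resist H P Q)"
proof -
  have H: "mgraph_wf H" unfolding H_def using mgraph_wf_delete_edge[OF G e nb] .
  have G': "finite_mgraph G" using G by (rule mgraph_wf_imp_finite_mgraph)
  obtain p q where p: "p \<in> verts H" and q: "q \<in> verts H" and PQ: "P = Vert p" "Q = Vert q"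
    using finite_mgraph_edge[OF G' e] unfolding H_def P_def Q_def by auto
  define \<phi> where "\<phi> = (\<lambda>x. jfun H t x s)"
  define g where "g = (\<lambda>x. jfun H P x Q)"
  define R where "R = resist H P Q"
  have R: "R = g Q"
    using jfun_reciprocity[OF H p q, of P Q] jfun_at_ground[OF H, of P Q] jfun_at_ground[OF H, of Q P] p q
    unfolding R_def resist_def g_def PQ by simp
  have lR: "l + R > 0" using l resist_Vert_nonneg[OF H p q] unfolding R_def PQ by simp
  define I where "I = (\<phi> P - \<phi> Q) / (l + R)"
  have \<phi>: "is_voltage H s t \<phi>" unfolding \<phi>_def using is_voltage_jfun[OF H s t] .
  have g: "is_voltage H Q P g" unfolding g_def using is_voltage_jfun[OF H] p q PQ by simp
  have lg: "l + g Q \<noteq> 0" using lR R by simp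
  have "is_voltage (set_length G e l) s t (extend_over_edge G e l (\<lambda>x. \<phi> x + I * (g x - g t)))"
    using is_voltage_set_length_delete_edge[OF G' e l s[unfolded H_def] t[unfolded H_def]
        \<phi>[unfolded H_def] g[unfolded H_def P_def Q_def] lg[unfolded Q_def]]
    unfolding I_def R P_def Q_def .
  then have "resist (set_length G e l) s t = \<phi> s + I * (g s - g t)"
    using resist_eqI[OF mgraph_wf_set_length[OF G l]] s t extend_over_edge_eq[of s G e]
    unfolding H_def by (simp add: points_set_length[OF e])
  also have "\<dots> = \<phi> s - (g s - g t)\<^sup>2 / (l + R)"
  proof -
    have recip: "\<phi> P - \<phi> Q = g t - g s" using jfun_reciprocity[OF H p q s t] unfolding \<phi>_def g_def PQ .
    have "l + R \<noteq> 0" using lR by simp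
    then show ?thesis unfolding I_def recip by (simp add: field_simps power2_eq_square)
  qed
  finally show ?thesis
    using jfun_swap_Vert[OF H p q s] jfun_swap_Vert[OF H p q t]
    unfolding \<phi>_def g_def R_def resist_def PQ by simp
qed

section \<open>Bridges\<close>

lemma adj_delete_edge_cases:
  assumes "adj G a b"
  shows "adj (delete_edge G e) a b \<or> {a, b} = {fst (ends G e), snd (ends G e)}"
proof -
  obtain e' where e': "e' \<in> edges G" "ends G e' = (a, b) \<or> ends G e' = (b, a)"
    using assms unfolding adj_def by auto
  show ?thesis
  proof (cases "e' = e")
    case True
    then show ?thesis using e'(2) by auto
  next
    case False
    then show ?thesis using e' unfolding adj_def by auto
  qed
qed

lemma vconn_delete_edge_cases:
  assumes "vconn G u w"
  shows "vconn (delete_edge G e) u w \<or>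
           vconn (delete_edge G e) u (fst (ends G e)) \<and> vconn (delete_edge G e) (snd (ends G e)) w \<or>
           vconn (delete_edge G e) u (snd (ends G e)) \<and> vconn (delete_edge G e) (fst (ends G e)) w"
  using assms unfolding vconn_def
proof (induction rule: rtranclp_induct)
  case (step w w')
  from adj_delete_edge_cases[OF step(2), of e] step(3)
  show ?case
    by (auto intro: rtranclp.rtrancl_into_rtrancl simp: doubleton_eq_iff)
qed simp

lemma bridge_ends_not_vconn:
  assumes G: "mgraph_wf G" and br: "is_bridge G e"
  shows "\<not> vconn (delete_edge G e) (fst (ends G e)) (snd (ends G e))"
proof
  let ?H = "delete_edge G e"
  assume pq: "vconn ?H (fst (ends G e)) (snd (ends G e))"
  have "vconn ?H u w" if "u \<in> verts G" "w \<in> verts G" for u w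
    using vconn_delete_edge_cases[of G u w e] G that pq vconn_sym[OF pq]
    unfolding mgraph_wf_def graph_connected_def by (blast intro: vconn_trans)
  then have "graph_connected ?H" unfolding graph_connected_def by simp
  then show False using br unfolding is_bridge_def by simp
qed

lemma vconn_delete_edge_ends:
  assumes G: "mgraph_wf G" and e: "e \<in> edges G" and v: "v \<in> verts G"
  shows "vconn (delete_edge G e) (fst (ends G e)) v \<or> vconn (delete_edge G e) (snd (ends G e)) v"
proof -
  have "fst (ends G e) \<in> verts G" using finite_mgraph_edge[OF mgraph_wf_imp_finite_mgraph[OF G] e] by simp
  then have "vconn G (fst (ends G e)) v" using G v unfolding mgraph_wf_def graph_connected_def by blast
  then show ?thesis using vconn_delete_edge_cases[of G _ v e] unfolding vconn_def by auto
qed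

lemma bridge_vconn_iff_same_side:
  fixes G :: "('v,'e) mgraph" and e :: 'e
  defines "H \<equiv> delete_edge G e" and "p \<equiv> fst (ends G e)" and "q \<equiv> snd (ends G e)"
  assumes G: "mgraph_wf G" and e: "e \<in> edges G" and br: "is_bridge G e"
    and a: "a \<in> verts G" and b: "b \<in> verts G"
  shows "vconn H a b \<longleftrightarrow> (vconn H p a \<longleftrightarrow> vconn H p b)"
proof
  assume ab: "vconn H a b"
  show "vconn H p a \<longleftrightarrow> vconn H p b"
    using vconn_trans[OF _ ab] vconn_trans[OF _ vconn_sym[OF ab]] by blast
next
  assume same: "vconn H p a \<longleftrightarrow> vconn H p b"
  have ends: "vconn H p w \<or> vconn H q w" if "w \<in> verts G" for w
    using vconn_delete_edge_ends[OF G e that] unfolding H_def p_def q_def .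
  show "vconn H a b"
  proof (cases "vconn H p a")
    case True
    with same have "vconn H p b" by simp
    with True show ?thesis by (rule vconn_trans[OF vconn_sym])
  next
    case False
    with same ends a b have "vconn H q a" "vconn H q b" by auto
    then show ?thesis by (rule vconn_trans[OF vconn_sym])
  qed
qed

lemma bridge_side_indicator:
  fixes G :: "('v,'e) mgraph" and e :: 'e
  defines "H \<equiv> delete_edge G e" and "p \<equiv> fst (ends G e)" and "q \<equiv> snd (ends G e)"
  defines "\<chi> \<equiv> \<lambda>v. if vconn (delete_edge G e) (fst (ends G e)) v then 1 else 0 :: real"
  assumes G: "mgraph_wf G" and e: "e \<in> edges G" and br: "is_bridge G e"
    and s: "s \<in> points H" and t: "t \<in> points H"
  shows "\<forall>e'\<in>edges H. \<chi> (fst (ends G e')) = \<chi> (snd (ends G e'))" "\<chi> p = 1" "\<chi> q = 0"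
    and "(\<chi> (rep G s) - \<chi> (rep G t))\<^sup>2 = (if same_component H s t then 0 else 1)"
proof -
  have \<chi>_eq: "\<chi> = (\<lambda>v. if vconn H p v then 1 else 0)" unfolding \<chi>_def H_def p_def ..
  show "\<forall>e'\<in>edges H. \<chi> (fst (ends G e')) = \<chi> (snd (ends G e'))"
  proof
    fix e' assume "e' \<in> edges H"
    then have "adj H (fst (ends G e')) (snd (ends G e'))" unfolding adj_def H_def by auto
    then have fs: "vconn H (fst (ends G e')) (snd (ends G e'))" unfolding vconn_def by (rule r_into_rtranclp)
    then have sf: "vconn H (snd (ends G e')) (fst (ends G e'))" by (rule vconn_sym)
    have "vconn H p (fst (ends G e')) \<longleftrightarrow> vconn H p (snd (ends G e'))"
      using vconn_trans[OF _ fs] vconn_trans[OF _ sf] by blast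
    then show "\<chi> (fst (ends G e')) = \<chi> (snd (ends G e'))" unfolding \<chi>_eq by simp
  qed
  show "\<chi> p = 1" unfolding \<chi>_eq vconn_def by simp
  show "\<chi> q = 0"
    unfolding \<chi>_eq H_def p_def q_def using bridge_ends_not_vconn[OF G br] by simp
  have rep: "rep (delete_edge G e) = rep G" by (rule rep_cong) simp
  have "rep G x \<in> verts G" if "x \<in> points H" for x
    using that finite_mgraph_edge[OF mgraph_wf_imp_finite_mgraph[OF G]] unfolding H_def
    by (cases x) auto
  then show "(\<chi> (rep G s) - \<chi> (rep G t))\<^sup>2 = (if same_component H s t then 0 else 1)"
    using bridge_vconn_iff_same_side[OF G e br, of "rep G s" "rep G t"] s t
    unfolding same_component_def \<chi>_eq H_def p_def rep by simp
qed

text \<open>Green's identity pairs \<chi>, whose Laplacian lives at the end points of e, with the voltage,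
  whose Laplacian lives at s and t.\<close>

lemma current_through_cut:
  fixes G :: "('v,'e) mgraph" and e :: 'e
  defines "H \<equiv> delete_edge G e" and "p \<equiv> fst (ends G e)" and "q \<equiv> snd (ends G e)"
  assumes G: "mgraph_wf G" and e: "e \<in> edges G"
    and s: "s \<in> points H" and t: "t \<in> points H"
    and \<chi>: "\<forall>e'\<in>edges H. \<chi> (fst (ends G e')) = \<chi> (snd (ends G e'))" "\<chi> p = 1" "\<chi> q = 0"
  shows "(jfun G t (Vert p) s - jfun G t (Vert q) s) / len G e = \<chi> (rep G s) - \<chi> (rep G t)"
proof -
  have G': "finite_mgraph G" using G by (rule mgraph_wf_imp_finite_mgraph)
  have sG: "s \<in> points G" and tG: "t \<in> points G" using s t unfolding H_def by (auto simp: points_delete_edge)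
  obtain x where x: "\<forall>v\<in>verts G. laplacian G x v = barycentric G t v - barycentric G s v"
    and jx: "\<And>y. jfun G t y s = kinked_interp G x s t y"
    using jfun_kinked_interp[OF G sG tG] by blast
  have pq: "p \<in> verts G" "q \<in> verts G" using finite_mgraph_edge[OF G' e] unfolding p_def q_def by auto
  have lap: "laplacian G \<chi> v = ((if v = q then 1 else 0) - (if v = p then 1 else 0)) / len G e" for v
    using laplacian_set_length[OF G' e, of "len G e" \<chi> v] laplacian_edge_const[of "delete_edge G e" \<chi> v]
      \<chi> unfolding set_length_len H_def p_def q_def by (auto simp: field_simps)
  have interp: "interp G \<chi> y = \<chi> (rep G y)" if "y \<in> points H" for y
    using that \<chi>(1) unfolding H_def by (intro interp_eq_rep) (auto simp: points_delete_edge)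
  have "(\<Sum>v\<in>verts G. x v * laplacian G \<chi> v)
          = (\<Sum>v\<in>verts G. (if v = q then x q / len G e else 0) - (if v = p then x p / len G e else 0))"
    unfolding lap by (intro sum.cong refl) (simp add: field_simps)
  also have "\<dots> = (x q - x p) / len G e"
    using pq finite_mgraph_finite(1)[OF G'] by (simp add: sum_subtractf diff_divide_distrib)
  finally have "(x q - x p) / len G e = (\<Sum>v\<in>verts G. x v * laplacian G \<chi> v)" ..
  also have "\<dots> = (\<Sum>v\<in>verts G. \<chi> v * laplacian G x v)" by (rule laplacian_symmetric[OF G'])
  also have "\<dots> = \<chi> (rep G t) - \<chi> (rep G s)"
    using sum_mult_laplacian_barycentric[OF G' sG tG x] interp[OF s] interp[OF t] by simp
  finally have "(x q - x p) / len G e = \<chi> (rep G t) - \<chi> (rep G s)" .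
  moreover have "(x p - x q) / len G e = - ((x q - x p) / len G e)" by (simp add: minus_divide_left)
  ultimately show ?thesis unfolding jx using pq by (simp add: kinked_interp_Vert)
qed

lemma is_voltage_restore_cut_edge:
  fixes G :: "('v,'e) mgraph" and e :: 'e
  defines "H \<equiv> delete_edge G e" and "p \<equiv> fst (ends G e)" and "q \<equiv> snd (ends G e)"
  assumes G: "finite_mgraph G" and e: "e \<in> edges G" and L': "L' > 0"
    and s: "s \<in> points H" and t: "t \<in> points H" and f: "is_voltage (set_length G e L') s t f"
    and \<chi>: "\<forall>e'\<in>edges H. \<chi> (fst (ends G e')) = \<chi> (snd (ends G e'))" "\<chi> p = 1" "\<chi> q = 0"
  defines "\<kappa> \<equiv> (f (Vert p) - f (Vert q)) / L' * (len G e - L')"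
  shows "is_voltage G s t (extend_over_edge G e (len G e) (\<lambda>y. f y + \<kappa> * (interp H \<chi> y - interp H \<chi> t)))"
proof -
  let ?L = "len G e"
  have H: "finite_mgraph H" unfolding H_def using G by (rule finite_mgraph_delete_edge)
  have L: "?L > 0" using finite_mgraph_edge[OF G e] by simp
  note restrict = voltage_restrict_delete_edge[OF G e L' s[unfolded H_def] t[unfolded H_def] f, folded H_def]
  define \<psi> where "\<psi> = (\<lambda>y. f y + \<kappa> * (interp H \<chi> y - interp H \<chi> t))"
  have \<psi>_lin: "\<psi> = (\<lambda>y. 1 * f y + \<kappa> * interp H \<chi> y + - \<kappa> * interp H \<chi> t)"
    unfolding \<psi>_def by (simp add: algebra_simps)
  have pa: "piecewise_affine H {s, t} \<psi>"
    unfolding \<psi>_lin by (rule piecewise_affine_lincomb[OF restrict(1) interp_piecewise_affine[OF H]])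
  have "laplacian H \<chi> v = 0" for v using \<chi>(1) unfolding H_def by (intro laplacian_edge_const) simp
  then have "outflow H (interp H \<chi>) y = 0" if "y \<in> points H" for y
    using outflow_interp[OF H that] by (cases y) auto
  then have out: "outflow H \<psi> y = outflow H f y" if "y \<in> points H" for y
    using outflow_lincomb[OF H restrict(1) interp_piecewise_affine[OF H, where x = \<chi>] _ that,
        where a = 1 and b = \<kappa> and k = "- \<kappa> * interp H \<chi> t"] that
    unfolding \<psi>_lin by simp
  \<comment> \<open>Along e the voltage drop grows from I * L' to I * L, where I is the current through e.\<close>
  have "(\<psi> (Vert p) - \<psi> (Vert q)) / ?L = (f (Vert p) - f (Vert q)) / L'"
    using \<chi>(2,3) L L' unfolding \<psi>_def \<kappa>_def by (simp add: field_simps)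
  then have "is_voltage (set_length G e ?L) s t (extend_over_edge G e ?L \<psi>)"
  proof (intro is_voltage_extend_over_edge[OF G e L s[unfolded H_def] t[unfolded H_def]])
    show "piecewise_affine (delete_edge G e) {s, t} \<psi>" using pa unfolding H_def .
    show "\<psi> t = 0" using f unfolding \<psi>_def is_voltage_iff by simp
    show "outflow (delete_edge G e) \<psi> (Inner e' u) = dipole s t (Inner e' u)"
      if "Inner e' u \<in> points (delete_edge G e)" for e' u
      using out[of "Inner e' u"] restrict(2)[of e' u] that unfolding H_def by simp
  qed (use out restrict(3) in \<open>simp add: H_def p_def q_def\<close>)
  then show ?thesis unfolding \<psi>_def set_length_len .
qed

lemma resist_set_length_cut:
  fixes G :: "('v,'e) mgraph" and e :: 'e
  defines "H \<equiv> delete_edge G e" and "p \<equiv> fst (ends G e)" and "q \<equiv> snd (ends G e)"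
  assumes G: "mgraph_wf G" and e: "e \<in> edges G" and L': "L' > 0"
    and s: "s \<in> points H" and t: "t \<in> points H"
    and \<chi>: "\<forall>e'\<in>edges H. \<chi> (fst (ends G e')) = \<chi> (snd (ends G e'))" "\<chi> p = 1" "\<chi> q = 0"
  shows "resist G s t = resist (set_length G e L') s t + (len G e - L') * (\<chi> (rep G s) - \<chi> (rep G t))\<^sup>2"
proof -
  let ?G' = "set_length G e L'"
  have G': "finite_mgraph G" using G by (rule mgraph_wf_imp_finite_mgraph)
  have wf': "mgraph_wf ?G'" using mgraph_wf_set_length[OF G L'] .
  have s': "s \<in> points ?G'" and t': "t \<in> points ?G'"
    using s t points_set_length[OF e] unfolding H_def by auto
  define f where "f = (\<lambda>y. jfun ?G' t y s)"
  have f: "is_voltage ?G' s t f" unfolding f_def using is_voltage_jfun[OF wf' s' t'] .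
  have I: "(f (Vert p) - f (Vert q)) / L' = \<chi> (rep G s) - \<chi> (rep G t)"
    using current_through_cut[OF wf', of e s t \<chi>] e s t \<chi> rep_cong[of ?G' G]
    unfolding f_def H_def p_def q_def by (simp add: points_delete_edge_set_length)
  have interp: "interp H \<chi> y = \<chi> (rep G y)" if "y \<in> points H" for y
  proof -
    have "interp H \<chi> y = \<chi> (rep H y)"
      using that \<chi>(1) unfolding H_def by (intro interp_eq_rep) (auto simp: points_delete_edge)
    then show ?thesis unfolding H_def by simp
  qed
  have "resist G s t = f s + (f (Vert p) - f (Vert q)) / L' * (len G e - L') * (interp H \<chi> s - interp H \<chi> t)"
    using resist_eqI[OF G _ is_voltage_restore_cut_edge[OF G' e L' s[unfolded H_def] t[unfolded H_def] f
          \<chi>[unfolded H_def p_def q_def]]] s t extend_over_edge_eq[of s G e]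
    unfolding H_def p_def q_def by (simp add: points_delete_edge)
  then show ?thesis
    using I interp[OF s] interp[OF t] unfolding f_def resist_def by (simp add: power2_eq_square)
qed

lemma resist_change_nonbridge:
  fixes G :: "('v,'e) mgraph" and e :: 'e
  defines "H \<equiv> delete_edge G e" and "P \<equiv> Vert (fst (ends G e))" and "Q \<equiv> Vert (snd (ends G e))"
    and "L \<equiv> len G e"
    and "R \<equiv> resist (delete_edge G e) (Vert (fst (ends G e))) (Vert (snd (ends G e)))"
  assumes G: "mgraph_wf G" and e: "e \<in> edges G" and nb: "\<not> is_bridge G e" and L': "L' > 0"
    and s: "s \<in> points H" and t: "t \<in> points H"
  shows "R \<ge> 0"
    and "resist G s t = resist (set_length G e L') s t
           + (L - L') / ((L + R) * (L' + R)) * (jfun H P Q s - jfun H P Q t)\<^sup>2"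
proof -
  have G': "finite_mgraph G" using G by (rule mgraph_wf_imp_finite_mgraph)
  have L: "L > 0" unfolding L_def using finite_mgraph_edge[OF G' e] by simp
  show R: "R \<ge> 0"
    using resist_Vert_nonneg[OF mgraph_wf_delete_edge[OF G e nb]] finite_mgraph_edge[OF G' e]
    unfolding R_def H_def P_def Q_def by simp
  define D where "D = (jfun H P Q s - jfun H P Q t)\<^sup>2"
  have "resist G s t = resist H s t - D / (L + R)"
    using resist_set_length_nonbridge[OF G e nb L s[unfolded H_def] t[unfolded H_def]]
    unfolding set_length_len L_def D_def R_def H_def P_def Q_def .
  moreover have "resist (set_length G e L') s t = resist H s t - D / (L' + R)"
    using resist_set_length_nonbridge[OF G e nb L' s[unfolded H_def] t[unfolded H_def]]
    unfolding D_def R_def H_def P_def Q_def .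
  moreover have "(L - L') / ((L + R) * (L' + R)) * D = D / (L' + R) - D / (L + R)"
    using L L' R by (simp add: field_simps)
  ultimately show "resist G s t = resist (set_length G e L') s t + (L - L') / ((L + R) * (L' + R)) * D"
    by simp
qed

lemma resist_change_bridge:
  fixes G :: "('v,'e) mgraph" and e :: 'e
  defines "H \<equiv> delete_edge G e"
  assumes G: "mgraph_wf G" and e: "e \<in> edges G" and br: "is_bridge G e" and L': "L' > 0"
    and s: "s \<in> points H" and t: "t \<in> points H"
  shows "same_component H s t \<Longrightarrow> resist G s t = resist (set_length G e L') s t"
    and "\<not> same_component H s t \<Longrightarrow> resist G s t = resist (set_length G e L') s t + len G e - L'"
  using resist_set_length_cut[OF G e L' s[unfolded H_def] t[unfolded H_def]
      bridge_side_indicator(1-3)[OF G e br s[unfolded H_def] t[unfolded H_def]]]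
    bridge_side_indicator(4)[OF G e br s[unfolded H_def] t[unfolded H_def]]
  unfolding H_def by simp_all

theorem theorem3p10:
  fixes G :: "('v,'e) mgraph" and e :: 'e and L' :: real and s t :: "('v,'e) pt"
  assumes "mgraph_wf G"
    and "e \<in> edges G"
    and "L' > 0"
    and "s \<in> points (delete_edge G e)" and "t \<in> points (delete_edge G e)"
  shows "let p = Vert (fst (ends G e)); q = Vert (snd (ends G e)); L = len G e;
             G' = set_length G e L'; H = delete_edge G e; R = resist H p q
         in (\<not> is_bridge G e \<longrightarrow>
               resist G s t = resist G' s t
                 + (L - L') / ((L + R) * (L' + R)) * (jfun H p q s - jfun H p q t)\<^sup>2)
          \<and> (is_bridge G e \<longrightarrow>
               (same_component H s t \<longrightarrow> resist G s t = resist G' s t) \<and>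
               (\<not> same_component H s t \<longrightarrow> resist G s t = resist G' s t + L - L'))
          \<and> (\<not> is_bridge G e \<and> L > L' \<longrightarrow>
               resist G s t \<ge> resist G' s t \<and>
               (resist G s t = resist G' s t \<longleftrightarrow> jfun H p q s = jfun H p q t))
          \<and> (is_bridge G e \<and> L > L' \<longrightarrow>
               resist G s t \<ge> resist G' s t \<and>
               (resist G s t = resist G' s t \<longleftrightarrow> same_component H s t))"
proof -
  define P Q H R where "P = Vert (fst (ends G e))" and "Q = Vert (snd (ends G e))"
    and "H = delete_edge G e" and "R = resist H P Q"
  define G' c where "G' = set_length G e L'" and "c = (len G e - L') / ((len G e + R) * (L' + R))"
  have NB: "resist G s t = resist G' s t + c * (jfun H P Q s - jfun H P Q t)\<^sup>2"
    and R: "R \<ge> 0" if "\<not> is_bridge G e"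
    using resist_change_nonbridge[OF assms(1,2) that assms(3-5)]
    unfolding c_def R_def H_def P_def Q_def G'_def by auto
  note BR = resist_change_bridge[OF assms(1,2) _ assms(3-5), folded H_def G'_def]
  have "resist G' s t \<le> resist G s t \<and> (resist G s t = resist G' s t \<longleftrightarrow> jfun H P Q s = jfun H P Q t)"
    if "\<not> is_bridge G e" "len G e > L'"
  proof -
    have "c > 0" using R[OF that(1)] that(2) assms(3) unfolding c_def by (intro divide_pos_pos mult_pos_pos) auto
    then show ?thesis using NB[OF that(1)] by auto
  qed
  moreover have "resist G' s t \<le> resist G s t \<and> (resist G s t = resist G' s t \<longleftrightarrow> same_component H s t)"
    if "is_bridge G e" "len G e > L'"
    using BR[OF that(1)] that(2) by (cases "same_component H s t") auto
  ultimately show ?thesis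
    unfolding Let_def P_def[symmetric] Q_def[symmetric] H_def[symmetric] R_def[symmetric]
      G'_def[symmetric] c_def[symmetric]
    using NB BR by blast
qed

end
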